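(* Let $\mathcal G$ be a Markov $\alpha$-potential game with $\alpha$-potential function $\Phi$, stage payoffs $u_i(s,a)\in[0,1]$, and initial distribution $\mu\in\Delta(S)$. Let $C_\Phi>0$ satisfy $|\Phi(\mu',\pi)-\Phi(\mu',\pi')|\le C_\Phi$ for all $\pi,\pi'\in\Pi$, $\mu'\in\Delta(S)$, and let $\tilde\kappa_\mu=\min_{\nu\in\Delta(S)}\max_{\pi\in\Pi}\|d_\mu^\pi/\nu\|_\infty<\infty$. Then the projected gradient-ascent algorithm run for $T$ steps with step size $$\eta=\frac{(1-\delta)^{2.5}\sqrt{C_\Phi+|I|^2\alpha T}}{2|I|\bar A\sqrt T}$$ satisfies $$\text{Nash-regret}(T)\le\mathcal O\Big(\frac{\sqrt{\tilde\kappa_\mu\bar A|I|}}{(1-\delta)^{9/4}}\Big(\frac{C_\Phi}{T}+|I|^2\alpha\Big)^{1/4}\Big).$$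
   Context: Markov game $\langle I,S,(A_i),(u_i),P,\delta\rangle$ with finite $I,S,A_i$, $\delta\in(0,1)$; $\bar A=\max_i|A_i|$. Stationary policies $\pi_i$ with $\pi_i(s)\in\Delta(A_i)$, sets $\Pi_i$, $\Pi$, $\Pi_{-i}$; $\pi_{-i}(s,a_{-i})=\prod_{j\ne i}\pi_j(s,a_j)$. $V_i(\mu,\pi)=\mathbb E[\sum_k\delta^k u_i(s^k,a^k)]$ with $s^0\sim\mu$, $a^k\sim\pi(s^k)$, $s^{k+1}\sim P(\cdot|s^k,a^k)$; $V_i(s,\pi)$ for initial state $s$. Markov $\alpha$-potential game: exists $\Phi:S\times\Pi\to\mathbb R$ with $|(\Phi(s,\pi_i',\pi_{-i})-\Phi(s,\pi_i,\pi_{-i}))-(V_i(s,\pi_i',\pi_{-i})-V_i(s,\pi_i,\pi_{-i}))|\le\alpha$ for all $s,i,\pi_i,\pi_i',\pi_{-i}$; $\Phi(\mu,\pi)=\sum_s\mu(s)\Phi(s,\pi)$. $d_\mu^\pi(s)=(1-\delta)\sum_{k\ge0}\delta^k\Pr(s^k=s\mid s^0\sim\mu)$. $Q_i(s,a_i;\pi)=\sum_{a_{-i}}\pi_{-i}(s,a_{-i})\big(u_i(s,a)+\delta\sum_{s'}P(s'|s,a)V_i(s',\pi)\big)$, $Q_i(s;\pi)$ the vector over $a_i$. Projected gradient-ascent algorithm: $\pi_i^{(0)}(s,a_i)=1/|A_i|$ and $\pi_i^{(t+1)}(s)=\mathcal P_{\Delta(A_i)}(\pi_i^{(t)}(s)+\eta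 Q_i(s;\pi^{(t)}))$ for all $i,s$ (Euclidean projection onto the simplex). Nash-regret: $\text{Nash-regret}(T)=\frac1T\sum_{t=1}^T\max_{i\in I}\big(\max_{\pi_i'\in\Pi_i}V_i(\mu,\pi_i',\pi_{-i}^{(t)})-V_i(\mu,\pi^{(t)})\big)$. *)

theory Defs
  imports Complex_Main "HOL-Library.Extended_Real" "HOL-Library.FuncSet"
begin

text \<open>
Players are I = {..<n}, states S = {..<m}, the actions of
player i are A_i = {..<k i}.  Stage payoff: u i s a.  Transition kernel: P s a s'.
A (joint) stationary policy is pol :: nat => nat => nat => real with pol i s a_i the
probability that player i plays a_i in state s; outside the relevant ranges it is 0
(canonical representation).
\<close>

definition joint_actions :: "nat \<Rightarrow> (nat \<Rightarrow> nat) \<Rightarrow> (nat \<Rightarrow> nat) set" where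
  "joint_actions n k = (\<Pi>\<^sub>E i\<in>{..<n}. {..<k i})"

definition simplex :: "nat \<Rightarrow> (nat \<Rightarrow> real) set" where
  "simplex K = {y. (\<forall>a<K. 0 \<le> y a) \<and> (\<Sum>a<K. y a) = 1 \<and> (\<forall>a\<ge>K. y a = 0)}"

definition state_dists :: "nat \<Rightarrow> (nat \<Rightarrow> real) set" where
  "state_dists m = {\<mu>. (\<forall>s<m. 0 \<le> \<mu> s) \<and> (\<Sum>s<m. \<mu> s) = 1}"

definition player_policies :: "nat \<Rightarrow> nat \<Rightarrow> (nat \<Rightarrow> nat \<Rightarrow> real) set" where
  "player_policies m K = {p. (\<forall>s<m. p s \<in> simplex K) \<and> (\<forall>s\<ge>m. \<forall>a. p s a = 0)}"

definition policies :: "nat \<Rightarrow> nat \<Rightarrow> (nat \<Rightarrow> nat) \<Rightarrow> (nat \<Rightarrow> nat \<Rightarrow> nat \<Rightarrow> real) set" where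
  "policies n m k = {pol. (\<forall>i<n. pol i \<in> player_policies m (k i)) \<and> (\<forall>i\<ge>n. pol i = (\<lambda>_ _. 0))}"

definition pjoint :: "nat \<Rightarrow> (nat \<Rightarrow> nat \<Rightarrow> nat \<Rightarrow> real) \<Rightarrow> nat \<Rightarrow> (nat \<Rightarrow> nat) \<Rightarrow> real" where
  "pjoint n pol s a = (\<Prod>i<n. pol i s (a i))"

definition trans_mat :: "nat \<Rightarrow> (nat \<Rightarrow> nat) \<Rightarrow> (nat \<Rightarrow> (nat \<Rightarrow> nat) \<Rightarrow> nat \<Rightarrow> real)
    \<Rightarrow> (nat \<Rightarrow> nat \<Rightarrow> nat \<Rightarrow> real) \<Rightarrow> nat \<Rightarrow> nat \<Rightarrow> real" where
  "trans_mat n k P pol s s' = (\<Sum>a\<in>joint_actions n k. pjoint n pol s a * P s a s')"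

fun stdist :: "nat \<Rightarrow> nat \<Rightarrow> (nat \<Rightarrow> nat) \<Rightarrow> (nat \<Rightarrow> (nat \<Rightarrow> nat) \<Rightarrow> nat \<Rightarrow> real)
    \<Rightarrow> (nat \<Rightarrow> nat \<Rightarrow> nat \<Rightarrow> real) \<Rightarrow> (nat \<Rightarrow> real) \<Rightarrow> nat \<Rightarrow> nat \<Rightarrow> real" where
  "stdist n m k P pol \<mu> 0 s = \<mu> s"
| "stdist n m k P pol \<mu> (Suc t) s' = (\<Sum>s<m. stdist n m k P pol \<mu> t s * trans_mat n k P pol s s')"

definition exp_reward :: "nat \<Rightarrow> (nat \<Rightarrow> nat) \<Rightarrow> (nat \<Rightarrow> nat \<Rightarrow> (nat \<Rightarrow> nat) \<Rightarrow> real)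
    \<Rightarrow> nat \<Rightarrow> (nat \<Rightarrow> nat \<Rightarrow> nat \<Rightarrow> real) \<Rightarrow> nat \<Rightarrow> real" where
  "exp_reward n k u i pol s = (\<Sum>a\<in>joint_actions n k. pjoint n pol s a * u i s a)"

definition value_fn :: "nat \<Rightarrow> nat \<Rightarrow> (nat \<Rightarrow> nat) \<Rightarrow> (nat \<Rightarrow> nat \<Rightarrow> (nat \<Rightarrow> nat) \<Rightarrow> real)
    \<Rightarrow> (nat \<Rightarrow> (nat \<Rightarrow> nat) \<Rightarrow> nat \<Rightarrow> real) \<Rightarrow> real \<Rightarrow> nat \<Rightarrow> (nat \<Rightarrow> real)
    \<Rightarrow> (nat \<Rightarrow> nat \<Rightarrow> nat \<Rightarrow> real) \<Rightarrow> real" where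
  "value_fn n m k u P \<delta> i \<mu> pol =
     (\<Sum>t. \<delta> ^ t * (\<Sum>s<m. stdist n m k P pol \<mu> t s * exp_reward n k u i pol s))"

definition point_dist :: "nat \<Rightarrow> nat \<Rightarrow> real" where
  "point_dist s = (\<lambda>s'. if s' = s then 1 else 0)"

definition visit_dist :: "nat \<Rightarrow> nat \<Rightarrow> (nat \<Rightarrow> nat) \<Rightarrow> (nat \<Rightarrow> (nat \<Rightarrow> nat) \<Rightarrow> nat \<Rightarrow> real)
    \<Rightarrow> real \<Rightarrow> (nat \<Rightarrow> real) \<Rightarrow> (nat \<Rightarrow> nat \<Rightarrow> nat \<Rightarrow> real) \<Rightarrow> nat \<Rightarrow> real" where
  "visit_dist n m k P \<delta> \<mu> pol s = (1 - \<delta>) * (\<Sum>t. \<delta> ^ t * stdist n m k P pol \<mu> t s)"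

definition Q_fn :: "nat \<Rightarrow> nat \<Rightarrow> (nat \<Rightarrow> nat) \<Rightarrow> (nat \<Rightarrow> nat \<Rightarrow> (nat \<Rightarrow> nat) \<Rightarrow> real)
    \<Rightarrow> (nat \<Rightarrow> (nat \<Rightarrow> nat) \<Rightarrow> nat \<Rightarrow> real) \<Rightarrow> real \<Rightarrow> nat
    \<Rightarrow> (nat \<Rightarrow> nat \<Rightarrow> nat \<Rightarrow> real) \<Rightarrow> nat \<Rightarrow> nat \<Rightarrow> real" where
  "Q_fn n m k u P \<delta> i pol s ai =
     (\<Sum>a\<in>{a\<in>joint_actions n k. a i = ai}.
        (\<Prod>j\<in>{..<n}-{i}. pol j s (a j)) *
        (u i s a + \<delta> * (\<Sum>s'<m. P s a s' * value_fn n m k u P \<delta> i (point_dist s') pol)))"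

definition proj_simplex :: "nat \<Rightarrow> (nat \<Rightarrow> real) \<Rightarrow> nat \<Rightarrow> real" where
  "proj_simplex K x = (THE y. y \<in> simplex K \<and>
      (\<forall>z\<in>simplex K. (\<Sum>a<K. (y a - x a)^2) \<le> (\<Sum>a<K. (z a - x a)^2)))"

fun pga :: "nat \<Rightarrow> nat \<Rightarrow> (nat \<Rightarrow> nat) \<Rightarrow> (nat \<Rightarrow> nat \<Rightarrow> (nat \<Rightarrow> nat) \<Rightarrow> real)
    \<Rightarrow> (nat \<Rightarrow> (nat \<Rightarrow> nat) \<Rightarrow> nat \<Rightarrow> real) \<Rightarrow> real \<Rightarrow> real \<Rightarrow> nat
    \<Rightarrow> nat \<Rightarrow> nat \<Rightarrow> nat \<Rightarrow> real" where
  "pga n m k u P \<delta> \<eta> 0 = (\<lambda>i s a. if i < n \<and> s < m \<and> a < k i then 1 / real (k i) else 0)"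
| "pga n m k u P \<delta> \<eta> (Suc t) =
     (\<lambda>i s. if i < n \<and> s < m then
         proj_simplex (k i) (\<lambda>a. pga n m k u P \<delta> \<eta> t i s a
                                 + \<eta> * Q_fn n m k u P \<delta> i (pga n m k u P \<delta> \<eta> t) s a)
       else (\<lambda>_. 0))"

definition nash_regret :: "nat \<Rightarrow> nat \<Rightarrow> (nat \<Rightarrow> nat) \<Rightarrow> (nat \<Rightarrow> nat \<Rightarrow> (nat \<Rightarrow> nat) \<Rightarrow> real)
    \<Rightarrow> (nat \<Rightarrow> (nat \<Rightarrow> nat) \<Rightarrow> nat \<Rightarrow> real) \<Rightarrow> real \<Rightarrow> (nat \<Rightarrow> real) \<Rightarrow> real \<Rightarrow> nat \<Rightarrow> real" where
  "nash_regret n m k u P \<delta> \<mu> \<eta> T =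
     (1 / real T) * (\<Sum>t=1..T. Max ((\<lambda>i.
        (SUP p\<in>player_policies m (k i).
            value_fn n m k u P \<delta> i \<mu> ((pga n m k u P \<delta> \<eta> t)(i := p)))
        - value_fn n m k u P \<delta> i \<mu> (pga n m k u P \<delta> \<eta> t)) ` {..<n}))"

definition alpha_potential :: "nat \<Rightarrow> nat \<Rightarrow> (nat \<Rightarrow> nat) \<Rightarrow> (nat \<Rightarrow> nat \<Rightarrow> (nat \<Rightarrow> nat) \<Rightarrow> real)
    \<Rightarrow> (nat \<Rightarrow> (nat \<Rightarrow> nat) \<Rightarrow> nat \<Rightarrow> real) \<Rightarrow> real \<Rightarrow> real
    \<Rightarrow> (nat \<Rightarrow> (nat \<Rightarrow> nat \<Rightarrow> nat \<Rightarrow> real) \<Rightarrow> real) \<Rightarrow> bool" where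
  "alpha_potential n m k u P \<delta> \<alpha> \<Phi> \<longleftrightarrow>
     (\<forall>s<m. \<forall>i<n. \<forall>pol\<in>policies n m k. \<forall>p\<in>player_policies m (k i).
        \<bar>(\<Phi> s (pol(i := p)) - \<Phi> s pol)
         - (value_fn n m k u P \<delta> i (point_dist s) (pol(i := p))
            - value_fn n m k u P \<delta> i (point_dist s) pol)\<bar> \<le> \<alpha>)"

definition Phi_dist :: "nat \<Rightarrow> (nat \<Rightarrow> (nat \<Rightarrow> nat \<Rightarrow> nat \<Rightarrow> real) \<Rightarrow> real) \<Rightarrow> (nat \<Rightarrow> real)
    \<Rightarrow> (nat \<Rightarrow> nat \<Rightarrow> nat \<Rightarrow> real) \<Rightarrow> real" where
  "Phi_dist m \<Phi> \<mu> pol = (\<Sum>s<m. \<mu> s * \<Phi> s pol)"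

definition ratio_sup :: "nat \<Rightarrow> (nat \<Rightarrow> real) \<Rightarrow> (nat \<Rightarrow> real) \<Rightarrow> ereal" where
  "ratio_sup m d \<nu> = (SUP s\<in>{..<m}.
      (if \<nu> s = 0 then (if d s = 0 then 0 else \<infinity>) else ereal (d s / \<nu> s)))"

definition kappa_tilde :: "nat \<Rightarrow> nat \<Rightarrow> (nat \<Rightarrow> nat) \<Rightarrow> (nat \<Rightarrow> (nat \<Rightarrow> nat) \<Rightarrow> nat \<Rightarrow> real)
    \<Rightarrow> real \<Rightarrow> (nat \<Rightarrow> real) \<Rightarrow> ereal" where
  "kappa_tilde n m k P \<delta> \<mu> = (INF \<nu>\<in>state_dists m. SUP pol\<in>policies n m k.
      ratio_sup m (visit_dist n m k P \<delta> \<mu> pol) \<nu>)"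

end

theory Submission
  imports Defs "HOL-Analysis.Convex" "HOL-Analysis.Elementary_Normed_Spaces"
begin

text \<open>
  Projected gradient ascent behaves like ascent on the potential.  By the performance-difference
  lemma, the change of player i's value caused by a change of its own policy is the
  Q-weighted policy change integrated against a discounted visitation distribution.  The
  variational inequality of the projection makes each player's step gain at least its squared
  length divided by \<open>\<eta>\<close>; updating the players one at a time and charging each switch to the
  \<open>\<alpha>\<close>-potential, one iteration raises \<open>\<Phi>(\<nu>,\<cdot>)\<close> by the \<open>\<nu>\<close>-averaged squared step
  minus \<open>O(n\<^sup>2\<eta>\<^sup>2A\<^sup>2/(1-\<delta>)\<^sup>5 + n\<alpha>)\<close>.  As the range of \<open>\<Phi>\<close> is at most C, the squared steps
  summed over T iterations are \<open>O(\<eta>(C + T(\<dots>)))\<close>.  The same variational inequality bounds a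
  best response's gain at a state by \<open>3/\<eta>\<close> times the step length there; transporting this
  from \<open>d\<^sub>\<mu>\<close> to \<open>\<nu>\<close> costs the mismatch coefficient \<open>\<kappa>\<close>, and Cauchy-Schwarz over states
  and iterations together with the choice of \<open>\<eta>\<close> gives the rate.
\<close>

section \<open>Projection onto the simplex and elementary inequalities\<close>

lemma simplex_threshold_exists:
  fixes x :: "nat \<Rightarrow> real"
  assumes K: "K \<ge> 1"
  obtains \<tau> where "(\<Sum>a<K. max (x a - \<tau>) 0) = 1"
proof -
  define f where "f = (\<lambda>\<tau>. \<Sum>a<K. max (x a - \<tau>) 0)"
  define lo where "lo = x 0 - 1"
  define hi where "hi = Max (x ` {..<K})"
  have hi: "\<And>a. a < K \<Longrightarrow> x a \<le> hi" unfolding hi_def by (intro Max_ge) auto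
  hence lohi: "lo \<le> hi" unfolding lo_def using K by force
  have fhi: "f hi = 0" unfolding f_def using hi by (intro sum.neutral) auto
  have "f lo \<ge> max (x 0 - lo) 0" unfolding f_def
    using K by (intro member_le_sum) auto
  hence flo: "f lo \<ge> 1" unfolding lo_def by simp
  have cont: "\<forall>t. lo \<le> t \<and> t \<le> hi \<longrightarrow> isCont f t" unfolding f_def
    by (auto intro!: continuous_intros)
  show ?thesis using IVT2[of f hi 1 lo, OF _ flo lohi cont] fhi that unfolding f_def by auto
qed

text \<open>The projection clips \<open>x - \<tau>\<close> at 0 for the threshold \<open>\<tau>\<close> making it a distribution.\<close>

lemma simplex_variational_point_exists:
  fixes x :: "nat \<Rightarrow> real"
  assumes K: "K \<ge> 1"
  shows "\<exists>y\<in>simplex K. \<forall>z\<in>simplex K. (\<Sum>a<K. (z a - y a) * (y a - x a)) \<ge> 0"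
proof -
  obtain \<tau> where tau: "(\<Sum>a<K. max (x a - \<tau>) 0) = 1" using simplex_threshold_exists[OF K] .
  define y where "y = (\<lambda>a. if a < K then max (x a - \<tau>) 0 else 0)"
  have ys: "y \<in> simplex K" unfolding simplex_def y_def using tau by auto
  have "(\<Sum>a<K. (z a - y a) * (y a - x a)) \<ge> 0" if z: "z \<in> simplex K" for z
  proof -
    have "(\<Sum>a<K. (z a - y a) * (- \<tau>)) \<le> (\<Sum>a<K. (z a - y a) * (y a - x a))"
    proof (rule sum_mono)
      fix a assume a: "a \<in> {..<K}"
      have z0: "z a \<ge> 0" using z a unfolding simplex_def by auto
      show "(z a - y a) * (- \<tau>) \<le> (z a - y a) * (y a - x a)"
      proof (cases "x a - \<tau> > 0")
        case True thus ?thesis using a unfolding y_def by auto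
      next
        case False
        hence "y a = 0" using a unfolding y_def by auto
        thus ?thesis using False z0 by (simp add: mult_left_mono)
      qed
    qed
    moreover have "(\<Sum>a<K. (z a - y a) * (- \<tau>)) = - \<tau> * ((\<Sum>a<K. z a) - (\<Sum>a<K. y a))"
      by (simp only: sum_subtractf[symmetric] sum_distrib_left mult.commute)
    ultimately show ?thesis using z ys unfolding simplex_def by simp
  qed
  thus ?thesis using ys by blast
qed

lemma sum_sq_diff_split:
  fixes x y z :: "nat \<Rightarrow> real"
  shows "(\<Sum>a<K. (z a - x a)^2) = (\<Sum>a<K. (y a - x a)^2) + (\<Sum>a<K. (z a - y a)^2)
           + 2 * (\<Sum>a<K. (z a - y a) * (y a - x a))"
proof -
  have "\<And>a. (z a - x a)^2 = (y a - x a)^2 + (z a - y a)^2 + 2 * ((z a - y a) * (y a - x a))"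
    by (simp add: power2_eq_square algebra_simps)
  thus ?thesis by (simp add: sum.distrib sum_distrib_left)
qed

lemma proj_simplex_char:
  fixes x :: "nat \<Rightarrow> real"
  assumes K: "K \<ge> 1"
  shows "proj_simplex K x \<in> simplex K"
    "\<And>z. z \<in> simplex K \<Longrightarrow> (\<Sum>a<K. (z a - proj_simplex K x a) * (proj_simplex K x a - x a)) \<ge> 0"
proof -
  obtain y where ys: "y \<in> simplex K"
    and vi: "\<And>z. z\<in>simplex K \<Longrightarrow> (\<Sum>a<K. (z a - y a) * (y a - x a)) \<ge> 0"
    using simplex_variational_point_exists[OF K] by blast
  have sq_nonneg: "0 \<le> (\<Sum>a<K. (z a - y a)^2)" for z :: "nat \<Rightarrow> real" by (auto intro: sum_nonneg)
  have "proj_simplex K x = y" unfolding proj_simplex_def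
  proof (rule the_equality)
    show "y \<in> simplex K \<and> (\<forall>z\<in>simplex K. (\<Sum>a<K. (y a - x a)\<^sup>2) \<le> (\<Sum>a<K. (z a - x a)\<^sup>2))"
      using ys vi sum_sq_diff_split[where x=x and y=y and K=K] sq_nonneg by (smt (verit))
  next
    fix w
    assume w: "w \<in> simplex K \<and> (\<forall>z\<in>simplex K. (\<Sum>a<K. (w a - x a)\<^sup>2) \<le> (\<Sum>a<K. (z a - x a)\<^sup>2))"
    hence "(\<Sum>a<K. (w a - y a)^2) = 0"
      using ys vi[of w] sum_sq_diff_split[where x=x and y=y and z=w and K=K] sq_nonneg[of w] by force
    hence "\<forall>a\<in>{..<K}. w a = y a" by (subst (asm) sum_nonneg_eq_0_iff) auto
    moreover have "\<forall>a\<ge>K. w a = y a" using w ys unfolding simplex_def by auto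
    ultimately show "w = y" by (metis linorder_not_le ext lessThan_iff)
  qed
  thus "proj_simplex K x \<in> simplex K"
    "\<And>z. z \<in> simplex K \<Longrightarrow> (\<Sum>a<K. (z a - proj_simplex K x a) * (proj_simplex K x a - x a)) \<ge> 0"
    using ys vi by simp_all
qed

lemma abs_sum_mult_le_sqrt:
  fixes x y :: "'a \<Rightarrow> real"
  shows "\<bar>\<Sum>b\<in>A. x b * y b\<bar> \<le> sqrt (\<Sum>b\<in>A. (x b)^2) * sqrt (\<Sum>b\<in>A. (y b)^2)"
proof -
  have "(\<Sum>b\<in>A. x b * y b)^2 \<le> (\<Sum>b\<in>A. (x b)^2) * (\<Sum>b\<in>A. (y b)^2)"
    by (rule Cauchy_Schwarz_ineq_sum)
  hence "sqrt ((\<Sum>b\<in>A. x b * y b)^2) \<le> sqrt ((\<Sum>b\<in>A. (x b)^2) * (\<Sum>b\<in>A. (y b)^2))"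
    by (rule real_sqrt_le_mono)
  thus ?thesis by (simp add: real_sqrt_mult)
qed

lemma le_mult_sqrt_imp_le_sq:
  fixes x c :: real
  assumes "0 \<le> x" "0 \<le> c" "x \<le> c * sqrt x"
  shows "x \<le> c^2"
proof (cases "x = 0")
  case False
  hence pos: "0 < sqrt x" using assms(1) by simp
  have "sqrt x * sqrt x \<le> c * sqrt x" using assms by simp
  hence "sqrt x \<le> c" using pos by (rule mult_right_le_imp_le)
  thus ?thesis using assms(1) by (metis power_mono real_sqrt_ge_zero real_sqrt_pow2)
qed (use assms in simp)

lemma sum_mult_sqrt_le_sqrt_sum:
  fixes d x :: "'a \<Rightarrow> real"
  assumes "\<forall>s\<in>A. 0 \<le> d s" "\<forall>s\<in>A. 0 \<le> x s" "(\<Sum>s\<in>A. d s) = 1"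
  shows "(\<Sum>s\<in>A. d s * sqrt (x s)) \<le> sqrt (\<Sum>s\<in>A. d s * x s)"
proof -
  have "(\<Sum>s\<in>A. d s * sqrt (x s)) = (\<Sum>s\<in>A. sqrt (d s) * sqrt (d s * x s))"
    using assms by (intro sum.cong refl) (simp add: real_sqrt_mult)
  also have "\<dots> \<le> sqrt (\<Sum>s\<in>A. (sqrt (d s))^2) * sqrt (\<Sum>s\<in>A. (sqrt (d s * x s))^2)"
    using abs_sum_mult_le_sqrt[of "\<lambda>s. sqrt (d s)" "\<lambda>s. sqrt (d s * x s)" A] by linarith
  also have "\<dots> = sqrt (\<Sum>s\<in>A. d s * x s)" using assms by simp
  finally show ?thesis .
qed

lemma simplex_le_1: "z \<in> simplex K \<Longrightarrow> b < K \<Longrightarrow> z b \<le> 1"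
proof -
  assume *: "z \<in> simplex K" "b < K"
  have "z b \<le> (\<Sum>c<K. z c)" using * unfolding simplex_def by (intro member_le_sum) auto
  thus ?thesis using * unfolding simplex_def by auto
qed

lemma simplex_sum_sq_diff_le_2: "z \<in> simplex K \<Longrightarrow> y \<in> simplex K \<Longrightarrow> (\<Sum>b<K. (z b - y b)^2) \<le> 2"
proof -
  assume z: "z \<in> simplex K" and y: "y \<in> simplex K"
  have "(\<Sum>b<K. (z b - y b)^2) \<le> (\<Sum>b<K. z b + y b)"
  proof (rule sum_mono)
    fix b assume b: "b \<in> {..<K}"
    have z0: "0 \<le> z b" "z b \<le> 1" using z b simplex_le_1[OF z] unfolding simplex_def by auto
    have y0: "0 \<le> y b" "y b \<le> 1" using y b simplex_le_1[OF y] unfolding simplex_def by auto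
    have "z b * z b \<le> z b" "y b * y b \<le> y b" using z0 y0 by (simp_all add: mult_left_le_one_le)
    moreover have "0 \<le> z b * y b" using z0 y0 by simp
    ultimately show "(z b - y b)^2 \<le> z b + y b" by (simp add: power2_eq_square algebra_simps)
  qed
  also have "\<dots> = 2" using z y unfolding simplex_def by (simp add: sum.distrib)
  finally show ?thesis .
qed

text \<open>A function D with \<open>D = g + \<delta> M D\<close> for a stochastic matrix M is the resolvent
  \<open>(I - \<delta> M)\<inverse> g\<close>; the following bounds are read off at an extremal state.\<close>

lemma discounted_fixpoint_lower_bound:
  fixes M :: "nat \<Rightarrow> nat \<Rightarrow> real"
  assumes \<delta>: "0 \<le> \<delta>" "\<delta> < 1"
    and M_nonneg: "\<And>s s'. s < m \<Longrightarrow> s' < m \<Longrightarrow> 0 \<le> M s s'"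
    and M_sum: "\<And>s. s < m \<Longrightarrow> (\<Sum>s'<m. M s s') = 1"
    and D: "\<And>s. s < m \<Longrightarrow> D s = g s + \<delta> * (\<Sum>s'<m. M s s' * D s')"
    and g: "\<And>s. s < m \<Longrightarrow> g s \<ge> - e"
    and s: "s < m"
  shows "D s \<ge> - e / (1 - \<delta>)"
proof -
  define mn where "mn = Min (D ` {..<m})"
  have mn: "\<And>s. s < m \<Longrightarrow> mn \<le> D s" unfolding mn_def by (intro Min_le) auto
  have "mn \<in> D ` {..<m}" unfolding mn_def using s by (intro Min_in) auto
  then obtain s0 where s0: "s0 < m" "D s0 = mn" by auto
  have "(\<Sum>s'<m. M s0 s' * mn) \<le> (\<Sum>s'<m. M s0 s' * D s')"
    using M_nonneg s0 mn by (intro sum_mono mult_left_mono) auto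
  hence "mn \<le> (\<Sum>s'<m. M s0 s' * D s')" using M_sum[OF s0(1)] by (simp add: sum_distrib_right[symmetric])
  hence "mn \<ge> - e + \<delta> * mn" using D[OF s0(1)] g[OF s0(1)] s0 \<delta>
    by (smt (verit) mult_left_mono)
  hence "(1 - \<delta>) * mn \<ge> - e" by (simp add: algebra_simps)
  hence "mn \<ge> - e / (1 - \<delta>)" using \<delta> by (simp add: field_simps)
  thus ?thesis using mn[OF s] by linarith
qed

lemma discounted_fixpoint_point_bound:
  fixes M :: "nat \<Rightarrow> nat \<Rightarrow> real"
  assumes \<delta>: "0 \<le> \<delta>" "\<delta> < 1"
    and M_nonneg: "\<And>s s'. s < m \<Longrightarrow> s' < m \<Longrightarrow> 0 \<le> M s s'"
    and M_sum: "\<And>s. s < m \<Longrightarrow> (\<Sum>s'<m. M s s') = 1"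
    and D: "\<And>s. s < m \<Longrightarrow> D s = g s + \<delta> * (\<Sum>s'<m. M s s' * D s')"
    and g: "\<And>s. s < m \<Longrightarrow> g s \<ge> - e"
    and s0: "s0 < m"
  shows "D s0 \<ge> g s0 - \<delta> * e / (1 - \<delta>)"
proof -
  have "(\<Sum>s'<m. M s0 s' * (- e / (1 - \<delta>))) \<le> (\<Sum>s'<m. M s0 s' * D s')"
    using M_nonneg s0 discounted_fixpoint_lower_bound[OF \<delta> M_nonneg M_sum D g]
    by (intro sum_mono mult_left_mono) auto
  also have "(\<Sum>s'<m. M s0 s' * (- e / (1 - \<delta>))) = - e / (1 - \<delta>)"
    using M_sum[OF s0] by (simp only: sum_distrib_right[symmetric] mult_1)
  finally have "- e / (1 - \<delta>) \<le> (\<Sum>s'<m. M s0 s' * D s')" .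
  hence "\<delta> * (- e / (1 - \<delta>)) \<le> \<delta> * (\<Sum>s'<m. M s0 s' * D s')" using \<delta> by (intro mult_left_mono) auto
  thus ?thesis using D[OF s0] by simp
qed

lemma discounted_fixpoint_abs_bound:
  fixes M :: "nat \<Rightarrow> nat \<Rightarrow> real"
  assumes \<delta>: "0 \<le> \<delta>" "\<delta> < 1"
    and M_nonneg: "\<And>s s'. s < m \<Longrightarrow> s' < m \<Longrightarrow> 0 \<le> M s s'"
    and M_sum: "\<And>s. s < m \<Longrightarrow> (\<Sum>s'<m. M s s') = 1"
    and D: "\<And>s. s < m \<Longrightarrow> D s = g s + \<delta> * (\<Sum>s'<m. M s s' * D s')"
    and g: "\<And>s. s < m \<Longrightarrow> \<bar>g s\<bar> \<le> e"
    and s: "s < m"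
  shows "\<bar>D s\<bar> \<le> e / (1 - \<delta>)"
proof -
  have "D s \<ge> - e / (1 - \<delta>)"
  proof (rule discounted_fixpoint_lower_bound[OF \<delta> M_nonneg M_sum D _ s])
    fix s assume "s < m" with g show "- e \<le> g s" by force
  qed
  moreover have "- D s \<ge> - e / (1 - \<delta>)"
  proof (rule discounted_fixpoint_lower_bound[OF \<delta> M_nonneg M_sum _ _ s, where g="\<lambda>s. - g s"])
    fix s assume "s < m"
    have "(\<Sum>s'<m. M s s' * - D s') = - (\<Sum>s'<m. M s s' * D s')" by (simp add: sum_negf)
    thus "- D s = - g s + \<delta> * (\<Sum>s'<m. M s s' * - D s')" using D[OF \<open>s < m\<close>] by simp
    show "- g s \<ge> - e" using g \<open>s < m\<close> by force
  qed
  ultimately show ?thesis by (simp add: abs_le_iff)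
qed

section \<open>Values, visitation distributions and the performance-difference lemma\<close>

lemma sum_point_dist_mult:
  assumes "s < m"
  shows "(\<Sum>s'<m. point_dist s s' * f s') = f s"
proof -
  have "(\<Sum>s'<m. point_dist s s' * f s') = (\<Sum>s'<m. if s' = s then f s' else 0)"
    by (intro sum.cong) (auto simp: point_dist_def)
  thus ?thesis using assms by simp
qed

lemma sum_mult_point_dist:
  assumes "s' < m"
  shows "(\<Sum>s<m. f s * point_dist s s') = f s'"
proof -
  have "(\<Sum>s<m. f s * point_dist s s') = (\<Sum>s<m. if s = s' then f s else 0)"
    by (intro sum.cong) (auto simp: point_dist_def)
  thus ?thesis using assms by simp
qed

locale game =
  fixes n m :: nat and k :: "nat \<Rightarrow> nat" and u :: "nat \<Rightarrow> nat \<Rightarrow> (nat\<Rightarrow>nat) \<Rightarrow> real"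
    and P :: "nat \<Rightarrow> (nat\<Rightarrow>nat) \<Rightarrow> nat \<Rightarrow> real" and \<delta> :: real
  assumes n_pos: "n \<ge> 1" and m_pos: "m \<ge> 1" and k_pos: "\<forall>i<n. k i \<ge> 1"
    and discount_pos: "0 < \<delta>" and discount_lt_1: "\<delta> < 1"
    and u_bounds: "\<forall>i<n. \<forall>s<m. \<forall>a\<in>joint_actions n k. 0 \<le> u i s a \<and> u i s a \<le> 1"
    and P_stochastic: "\<forall>s<m. \<forall>a\<in>joint_actions n k. (\<forall>s'<m. 0 \<le> P s a s') \<and> (\<Sum>s'<m. P s a s') = 1"
begin

abbreviation "JA \<equiv> joint_actions n k"
abbreviation "Pol \<equiv> policies n m k"
abbreviation "pj \<equiv> pjoint n"
abbreviation "TM \<equiv> trans_mat n k P"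
abbreviation "sd \<equiv> stdist n m k P"
abbreviation "V i pol s \<equiv> value_fn n m k u P \<delta> i (point_dist s) pol"
abbreviation "Vm i \<mu> pol \<equiv> value_fn n m k u P \<delta> i \<mu> pol"
abbreviation "rw i pol s \<equiv> exp_reward n k u i pol s"
abbreviation "Q \<equiv> Q_fn n m k u P \<delta>"
abbreviation "vd \<mu> pol \<equiv> visit_dist n m k P \<delta> \<mu> pol"

lemma discount_nonneg: "0 \<le> \<delta>" using discount_pos by simp

lemma finite_JA: "finite JA" unfolding joint_actions_def by (rule finite_PiE) auto

lemma JA_less: "a \<in> JA \<Longrightarrow> i < n \<Longrightarrow> a i < k i" unfolding joint_actions_def by auto

lemma policy_nonneg: "pol \<in> Pol \<Longrightarrow> i < n \<Longrightarrow> s < m \<Longrightarrow> b < k i \<Longrightarrow> 0 \<le> pol i s b"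
  unfolding policies_def player_policies_def simplex_def by auto

lemma policy_sum: "pol \<in> Pol \<Longrightarrow> i < n \<Longrightarrow> s < m \<Longrightarrow> (\<Sum>b<k i. pol i s b) = 1"
  unfolding policies_def player_policies_def simplex_def by auto

lemma pjoint_nonneg: "pol \<in> Pol \<Longrightarrow> s < m \<Longrightarrow> a \<in> JA \<Longrightarrow> 0 \<le> pj pol s a"
  unfolding pjoint_def by (intro prod_nonneg) (auto intro: policy_nonneg JA_less)

lemma pjoint_sum: "pol \<in> Pol \<Longrightarrow> s < m \<Longrightarrow> (\<Sum>a\<in>JA. pj pol s a) = 1"
proof -
  assume *: "pol \<in> Pol" "s < m"
  have "(\<Sum>a\<in>JA. pj pol s a) = (\<Prod>i<n. \<Sum>b<k i. pol i s b)"
    unfolding pjoint_def joint_actions_def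
    by (subst prod_sum_PiE) auto
  also have "\<dots> = 1" using * policy_sum by simp
  finally show ?thesis .
qed

lemma trans_mat_nonneg: "pol \<in> Pol \<Longrightarrow> s < m \<Longrightarrow> s' < m \<Longrightarrow> 0 \<le> TM pol s s'"
  unfolding trans_mat_def using P_stochastic by (intro sum_nonneg mult_nonneg_nonneg pjoint_nonneg) auto

lemma trans_mat_sum: "pol \<in> Pol \<Longrightarrow> s < m \<Longrightarrow> (\<Sum>s'<m. TM pol s s') = 1"
proof -
  assume *: "pol \<in> Pol" "s < m"
  have "(\<Sum>s'<m. TM pol s s') = (\<Sum>a\<in>JA. pj pol s a * (\<Sum>s'<m. P s a s'))"
    unfolding trans_mat_def by (subst sum.swap) (simp add: sum_distrib_left)
  also have "\<dots> = (\<Sum>a\<in>JA. pj pol s a)" using P_stochastic * by (intro sum.cong) auto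
  finally show ?thesis using pjoint_sum * by simp
qed

lemma stdist_linear: "s' < m \<Longrightarrow> sd pol \<mu> t s' = (\<Sum>s<m. \<mu> s * sd pol (point_dist s) t s')"
proof (induction t arbitrary: s')
  case 0 thus ?case by (simp add: sum_mult_point_dist)
next
  case (Suc t)
  have "sd pol \<mu> (Suc t) s' = (\<Sum>s1<m. (\<Sum>s<m. \<mu> s * sd pol (point_dist s) t s1) * TM pol s1 s')"
    using Suc.IH by simp
  also have "\<dots> = (\<Sum>s1<m. \<Sum>s<m. \<mu> s * (sd pol (point_dist s) t s1 * TM pol s1 s'))"
    by (simp only: sum_distrib_right mult.assoc)
  also have "\<dots> = (\<Sum>s<m. \<Sum>s1<m. \<mu> s * (sd pol (point_dist s) t s1 * TM pol s1 s'))"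
    by (rule sum.swap)
  also have "\<dots> = (\<Sum>s<m. \<mu> s * (\<Sum>s1<m. sd pol (point_dist s) t s1 * TM pol s1 s'))"
    by (simp only: sum_distrib_left)
  finally show ?case by simp
qed

lemma stdist_Suc_shift: "sd pol \<mu> (Suc t) s' = sd pol (\<lambda>s1. \<Sum>s<m. \<mu> s * TM pol s s1) t s'"
proof (induction t arbitrary: s')
  case 0 thus ?case by simp
next
  case (Suc t)
  have "sd pol \<mu> (Suc (Suc t)) s' = (\<Sum>s<m. sd pol \<mu> (Suc t) s * TM pol s s')"
    by (rule stdist.simps(2))
  also have "\<dots> = (\<Sum>s<m. sd pol (\<lambda>s1. \<Sum>s<m. \<mu> s * TM pol s s1) t s * TM pol s s')"
    by (simp only: Suc.IH)
  also have "\<dots> = sd pol (\<lambda>s1. \<Sum>s<m. \<mu> s * TM pol s s1) (Suc t) s'"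
    by (rule stdist.simps(2)[symmetric])
  finally show ?case .
qed

lemma stdist_point_dist_Suc: "s < m \<Longrightarrow> s' < m \<Longrightarrow>
   sd pol (point_dist s) (Suc t) s' = (\<Sum>s1<m. TM pol s s1 * sd pol (point_dist s1) t s')"
proof -
  assume *: "s < m" "s' < m"
  hence "(\<lambda>s1. \<Sum>s0<m. point_dist s s0 * TM pol s0 s1) = (\<lambda>s1. TM pol s s1)"
    by (simp add: sum_point_dist_mult)
  thus ?thesis using stdist_Suc_shift[of pol "point_dist s" t s'] stdist_linear[OF *(2), where pol=pol and \<mu>="TM pol s" and t=t] by simp
qed

lemma sum_stdist_point_dist_Suc:
  assumes s: "s < m"
  shows "(\<Sum>s'<m. sd pol (point_dist s) (Suc t) s' * f s')
    = (\<Sum>s1<m. TM pol s s1 * (\<Sum>s'<m. sd pol (point_dist s1) t s' * f s'))"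
proof -
  have "(\<Sum>s'<m. sd pol (point_dist s) (Suc t) s' * f s')
      = (\<Sum>s'<m. \<Sum>s1<m. TM pol s s1 * (sd pol (point_dist s1) t s' * f s'))"
  proof (intro sum.cong refl)
    fix s' assume "s' \<in> {..<m}"
    thus "sd pol (point_dist s) (Suc t) s' * f s' = (\<Sum>s1<m. TM pol s s1 * (sd pol (point_dist s1) t s' * f s'))"
      using s by (subst stdist_point_dist_Suc) (auto simp: sum_distrib_right mult.assoc)
  qed
  also have "\<dots> = (\<Sum>s1<m. TM pol s s1 * (\<Sum>s'<m. sd pol (point_dist s1) t s' * f s'))"
    by (subst sum.swap) (simp only: sum_distrib_left)
  finally show ?thesis .
qed

lemma point_dist_in_state_dists: "s < m \<Longrightarrow> point_dist s \<in> state_dists m"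
  using sum_point_dist_mult[of s m "\<lambda>_. 1"] unfolding state_dists_def by (auto simp: point_dist_def)

lemma stdist_sum_eq_1:
  assumes pol: "pol \<in> Pol" and mu: "\<mu> \<in> state_dists m"
  shows "(\<Sum>s<m. sd pol \<mu> t s) = 1"
proof (induction t)
  case 0 thus ?case using mu unfolding state_dists_def by simp
next
  case (Suc t)
  have "(\<Sum>s'<m. sd pol \<mu> (Suc t) s') = (\<Sum>s<m. sd pol \<mu> t s * (\<Sum>s'<m. TM pol s s'))"
    by (simp add: sum_distrib_left) (rule sum.swap)
  also have "\<dots> = (\<Sum>s<m. sd pol \<mu> t s)" using trans_mat_sum pol by simp
  finally show ?case using Suc by simp
qed

lemma stdist_nonneg:
  assumes pol: "pol \<in> Pol" and mu: "\<mu> \<in> state_dists m"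
  shows "s < m \<Longrightarrow> 0 \<le> sd pol \<mu> t s"
proof (induction t arbitrary: s)
  case 0 thus ?case using mu unfolding state_dists_def by simp
next
  case (Suc t) thus ?case using pol by (auto intro!: sum_nonneg mult_nonneg_nonneg trans_mat_nonneg)
qed

lemma abs_sum_stdist_le:
  assumes "pol \<in> Pol" "\<mu> \<in> state_dists m" "\<And>s. s < m \<Longrightarrow> \<bar>f s\<bar> \<le> B"
  shows "\<bar>\<Sum>s<m. sd pol \<mu> t s * f s\<bar> \<le> B"
proof -
  have "\<bar>\<Sum>s<m. sd pol \<mu> t s * f s\<bar> \<le> (\<Sum>s<m. \<bar>sd pol \<mu> t s * f s\<bar>)" by (rule sum_abs)
  also have "\<dots> \<le> (\<Sum>s<m. sd pol \<mu> t s * B)"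
    using assms stdist_nonneg by (intro sum_mono) (auto simp: abs_mult intro: mult_left_mono)
  also have "\<dots> = B" using stdist_sum_eq_1 assms by (simp add: sum_distrib_right[symmetric])
  finally show ?thesis .
qed

lemma summable_geometric_mult: "summable (\<lambda>t. B * \<delta> ^ t)"
  using discount_pos discount_lt_1 by (intro summable_mult summable_geometric) auto

lemma summable_discounted_stdist:
  assumes "pol \<in> Pol" "\<mu> \<in> state_dists m" "\<And>s. s < m \<Longrightarrow> \<bar>f s\<bar> \<le> B"
  shows "summable (\<lambda>t. \<delta> ^ t * (\<Sum>s<m. sd pol \<mu> t s * f s))"
proof (rule summable_comparison_test'[OF summable_geometric_mult[of B]])
  fix t :: nat
  have "\<bar>\<Sum>s<m. sd pol \<mu> t s * f s\<bar> \<le> B" by (rule abs_sum_stdist_le[OF assms])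
  thus "norm (\<delta> ^ t * (\<Sum>s<m. sd pol \<mu> t s * f s)) \<le> B * \<delta> ^ t"
    using discount_pos by (simp add: abs_mult mult.commute mult_right_mono)
qed

lemma exp_reward_bounds: "pol \<in> Pol \<Longrightarrow> i < n \<Longrightarrow> s < m \<Longrightarrow> 0 \<le> rw i pol s \<and> rw i pol s \<le> 1"
proof -
  assume *: "pol \<in> Pol" "i < n" "s < m"
  have "rw i pol s \<le> (\<Sum>a\<in>JA. pj pol s a * 1)" unfolding exp_reward_def
    using * u_bounds by (intro sum_mono mult_left_mono) (auto intro: pjoint_nonneg)
  moreover have "0 \<le> rw i pol s" unfolding exp_reward_def
    using * u_bounds by (intro sum_nonneg mult_nonneg_nonneg) (auto intro: pjoint_nonneg)
  ultimately show ?thesis using pjoint_sum * by simp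
qed

lemma summable_discounted_reward: "pol \<in> Pol \<Longrightarrow> \<mu> \<in> state_dists m \<Longrightarrow> i < n \<Longrightarrow>
   summable (\<lambda>t. \<delta> ^ t * (\<Sum>s<m. sd pol \<mu> t s * rw i pol s))"
  by (rule summable_discounted_stdist[where B=1]) (use exp_reward_bounds in auto)

lemma value_fn_linear:
  assumes "pol \<in> Pol" "\<mu> \<in> state_dists m" "i < n"
  shows "Vm i \<mu> pol = (\<Sum>s<m. \<mu> s * V i pol s)"
proof -
  have "Vm i \<mu> pol = (\<Sum>t. \<Sum>s<m. \<mu> s * (\<delta> ^ t * (\<Sum>s'<m. sd pol (point_dist s) t s' * rw i pol s')))"
    unfolding value_fn_def
  proof (intro suminf_cong)
    fix t
    have "(\<Sum>s'<m. sd pol \<mu> t s' * rw i pol s') = (\<Sum>s'<m. (\<Sum>s<m. \<mu> s * sd pol (point_dist s) t s') * rw i pol s')"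
      by (intro sum.cong refl) (simp add: stdist_linear[symmetric])
    also have "\<dots> = (\<Sum>s'<m. \<Sum>s<m. \<mu> s * (sd pol (point_dist s) t s' * rw i pol s'))"
      by (simp only: sum_distrib_right mult.assoc)
    also have "\<dots> = (\<Sum>s<m. \<Sum>s'<m. \<mu> s * (sd pol (point_dist s) t s' * rw i pol s'))"
      by (rule sum.swap)
    also have "\<dots> = (\<Sum>s<m. \<mu> s * (\<Sum>s'<m. sd pol (point_dist s) t s' * rw i pol s'))"
      by (simp only: sum_distrib_left)
    finally show "\<delta> ^ t * (\<Sum>s'<m. sd pol \<mu> t s' * rw i pol s') =
        (\<Sum>s<m. \<mu> s * (\<delta> ^ t * (\<Sum>s'<m. sd pol (point_dist s) t s' * rw i pol s')))"
      by (simp add: sum_distrib_left mult.left_commute)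
  qed
  also have "\<dots> = (\<Sum>s<m. \<Sum>t. \<mu> s * (\<delta> ^ t * (\<Sum>s'<m. sd pol (point_dist s) t s' * rw i pol s')))"
    using assms point_dist_in_state_dists summable_discounted_reward by (intro suminf_sum summable_mult) auto
  also have "\<dots> = (\<Sum>s<m. \<mu> s * V i pol s)"
    unfolding value_fn_def
    using assms point_dist_in_state_dists summable_discounted_reward by (intro sum.cong refl suminf_mult) auto
  finally show ?thesis .
qed

lemma value_bellman:
  assumes pol: "pol \<in> Pol" and i: "i < n" and s: "s < m"
  shows "V i pol s = rw i pol s + \<delta> * (\<Sum>s1<m. TM pol s s1 * V i pol s1)"
proof -
  define F where "F = (\<lambda>\<mu> t. \<delta> ^ t * (\<Sum>s'<m. sd pol \<mu> t s' * rw i pol s'))"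
  have sF: "\<And>s. s < m \<Longrightarrow> summable (F (point_dist s))"
    unfolding F_def using summable_discounted_reward pol i point_dist_in_state_dists by auto
  have V: "\<And>s. V i pol s = suminf (F (point_dist s))" unfolding value_fn_def F_def by simp
  have F0: "F (point_dist s) 0 = rw i pol s"
    unfolding F_def using s by (simp add: sum_point_dist_mult)
  have FS: "F (point_dist s) (Suc t) = \<delta> * (\<Sum>s1<m. TM pol s s1 * F (point_dist s1) t)" for t
    unfolding F_def sum_stdist_point_dist_Suc[OF s] by (simp add: sum_distrib_left mult_ac)
  have "suminf (F (point_dist s)) = F (point_dist s) 0 + (\<Sum>t. F (point_dist s) (Suc t))"
    using suminf_split_head[OF sF[OF s]] by simp
  also have "(\<Sum>t. F (point_dist s) (Suc t)) = (\<Sum>t. \<delta> * (\<Sum>s1<m. TM pol s s1 * F (point_dist s1) t))"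
    using FS by simp
  also have "\<dots> = \<delta> * (\<Sum>t. \<Sum>s1<m. TM pol s s1 * F (point_dist s1) t)"
    using sF by (intro suminf_mult summable_sum summable_mult) auto
  also have "(\<Sum>t. \<Sum>s1<m. TM pol s s1 * F (point_dist s1) t) = (\<Sum>s1<m. \<Sum>t. TM pol s s1 * F (point_dist s1) t)"
    using sF by (intro suminf_sum summable_mult) auto
  also have "\<dots> = (\<Sum>s1<m. TM pol s s1 * suminf (F (point_dist s1)))"
    using sF by (intro sum.cong refl suminf_mult) auto
  finally show ?thesis using F0 V by simp
qed

lemma value_bounds:
  assumes pol: "pol \<in> Pol" and i: "i < n" and s: "s < m"
  shows "0 \<le> V i pol s \<and> V i pol s \<le> 1 / (1 - \<delta>)"
proof -
  define F where "F = (\<lambda>t. \<delta> ^ t * (\<Sum>s'<m. sd pol (point_dist s) t s' * rw i pol s'))"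
  have sF: "summable F" unfolding F_def using summable_discounted_reward pol i point_dist_in_state_dists s by auto
  have b: "\<bar>\<Sum>s'<m. sd pol (point_dist s) t s' * rw i pol s'\<bar> \<le> 1" for t
    using exp_reward_bounds pol i point_dist_in_state_dists s by (intro abs_sum_stdist_le) auto
  have nn: "0 \<le> (\<Sum>s'<m. sd pol (point_dist s) t s' * rw i pol s')" for t
    using exp_reward_bounds pol i point_dist_in_state_dists s stdist_nonneg by (intro sum_nonneg mult_nonneg_nonneg) auto
  have "0 \<le> suminf F" using sF nn discount_pos by (intro suminf_nonneg) (auto simp: F_def)
  moreover have "suminf F \<le> (\<Sum>t. 1 * \<delta> ^ t)"
  proof (rule suminf_le[OF _ sF summable_geometric_mult])
    fix t show "F t \<le> 1 * \<delta> ^ t" unfolding F_def using b[of t] discount_pos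
      by (simp add: mult_left_le abs_le_iff)
  qed
  moreover have "(\<Sum>t. 1 * \<delta> ^ t) = 1 / (1 - \<delta>)" using suminf_geometric[of \<delta>] discount_pos discount_lt_1 by simp
  ultimately show ?thesis unfolding value_fn_def F_def by simp
qed

definition action_value :: "(nat \<Rightarrow> nat \<Rightarrow> nat \<Rightarrow> real) \<Rightarrow> nat \<Rightarrow> nat \<Rightarrow> (nat \<Rightarrow> nat) \<Rightarrow> real" where
  "action_value pol i s a = u i s a + \<delta> * (\<Sum>s1<m. P s a s1 * V i pol s1)"

lemma value_eq_action_value:
  assumes pol: "pol \<in> Pol" and i: "i < n" and s: "s < m"
  shows "V i pol s = (\<Sum>a\<in>JA. pj pol s a * action_value pol i s a)"
proof -
  have "(\<Sum>s1<m. TM pol s s1 * V i pol s1) = (\<Sum>s1<m. \<Sum>a\<in>JA. pj pol s a * (P s a s1 * V i pol s1))"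
    unfolding trans_mat_def by (simp only: sum_distrib_right mult.assoc)
  also have "\<dots> = (\<Sum>a\<in>JA. \<Sum>s1<m. pj pol s a * (P s a s1 * V i pol s1))" by (rule sum.swap)
  also have "\<dots> = (\<Sum>a\<in>JA. pj pol s a * (\<Sum>s1<m. P s a s1 * V i pol s1))" by (simp only: sum_distrib_left)
  finally have e: "(\<Sum>s1<m. TM pol s s1 * V i pol s1) = (\<Sum>a\<in>JA. pj pol s a * (\<Sum>s1<m. P s a s1 * V i pol s1))" .
  show ?thesis unfolding value_bellman[OF assms] e exp_reward_def action_value_def
    by (simp add: sum_distrib_left sum.distrib distrib_left mult_ac)
qed

lemma action_value_bounds:
  assumes pol: "pol \<in> Pol" and i: "i < n" and s: "s < m" and a: "a \<in> JA"
  shows "0 \<le> action_value pol i s a \<and> action_value pol i s a \<le> 1 / (1 - \<delta>)"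
proof -
  have Pn: "\<And>s1. s1 < m \<Longrightarrow> 0 \<le> P s a s1" and Ps: "(\<Sum>s1<m. P s a s1) = 1" using P_stochastic s a by auto
  have "(\<Sum>s1<m. P s a s1 * V i pol s1) \<le> (\<Sum>s1<m. P s a s1 * (1 / (1 - \<delta>)))"
    using value_bounds[OF pol i] Pn by (intro sum_mono mult_left_mono) auto
  also have "\<dots> = 1 / (1 - \<delta>)" using Ps by (simp add: sum_divide_distrib[symmetric])
  finally have up: "(\<Sum>s1<m. P s a s1 * V i pol s1) \<le> 1 / (1 - \<delta>)" .
  have lo: "0 \<le> (\<Sum>s1<m. P s a s1 * V i pol s1)"
    using value_bounds[OF pol i] Pn by (intro sum_nonneg mult_nonneg_nonneg) auto
  have u: "0 \<le> u i s a" "u i s a \<le> 1" using u_bounds i s a by auto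
  have "action_value pol i s a \<le> 1 + \<delta> * (1 / (1 - \<delta>))" unfolding action_value_def
    using u up discount_pos by (intro add_mono mult_left_mono) auto
  also have "\<dots> = 1 / (1 - \<delta>)" using discount_lt_1 by (simp add: field_simps)
  finally show ?thesis unfolding action_value_def using u lo discount_pos by auto
qed

lemma value_diff_recursion:
  assumes pol: "pol \<in> Pol" and pol': "pol' \<in> Pol" and i: "i < n" and s: "s < m"
  shows "V i pol' s - V i pol s = (\<Sum>a\<in>JA. (pj pol' s a - pj pol s a) * action_value pol i s a)
     + \<delta> * (\<Sum>s1<m. TM pol' s s1 * (V i pol' s1 - V i pol s1))"
proof -
  have "(\<Sum>a\<in>JA. pj pol' s a * (action_value pol' i s a - action_value pol i s a)) = \<delta> * (\<Sum>s1<m. TM pol' s s1 * (V i pol' s1 - V i pol s1))"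
  proof -
    have "(\<Sum>a\<in>JA. pj pol' s a * (action_value pol' i s a - action_value pol i s a)) =
          (\<Sum>a\<in>JA. \<Sum>s1<m. \<delta> * (pj pol' s a * P s a s1 * (V i pol' s1 - V i pol s1)))"
      unfolding action_value_def by (intro sum.cong refl) (simp add: sum_distrib_left sum_subtractf[symmetric] algebra_simps)
    also have "\<dots> = (\<Sum>s1<m. \<Sum>a\<in>JA. \<delta> * (pj pol' s a * P s a s1 * (V i pol' s1 - V i pol s1)))"
      by (rule sum.swap)
    also have "\<dots> = \<delta> * (\<Sum>s1<m. TM pol' s s1 * (V i pol' s1 - V i pol s1))"
      unfolding trans_mat_def by (simp add: sum_distrib_left sum_distrib_right)
    finally show ?thesis .
  qed
  moreover have "V i pol' s - V i pol s = (\<Sum>a\<in>JA. (pj pol' s a - pj pol s a) * action_value pol i s a)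
     + (\<Sum>a\<in>JA. pj pol' s a * (action_value pol' i s a - action_value pol i s a))"
    unfolding value_eq_action_value[OF pol i s] value_eq_action_value[OF pol' i s]
    by (simp add: sum.distrib[symmetric] sum_subtractf[symmetric] algebra_simps)
  ultimately show ?thesis by simp
qed

lemma stdist_le_1: "pol \<in> Pol \<Longrightarrow> \<mu> \<in> state_dists m \<Longrightarrow> s < m \<Longrightarrow> sd pol \<mu> t s \<le> 1"
proof -
  assume *: "pol \<in> Pol" "\<mu> \<in> state_dists m" "s < m"
  have "sd pol \<mu> t s \<le> (\<Sum>s'<m. sd pol \<mu> t s')" using * by (intro member_le_sum) (auto intro: stdist_nonneg)
  thus ?thesis using stdist_sum_eq_1 * by simp
qed

lemma summable_discounted_stdist_at:
  assumes pol: "pol \<in> Pol" and mu: "\<mu> \<in> state_dists m" and s: "s < m"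
  shows "summable (\<lambda>t. \<delta> ^ t * sd pol \<mu> t s)"
proof (rule summable_comparison_test'[OF summable_geometric_mult[of 1]])
  fix t :: nat
  show "norm (\<delta> ^ t * sd pol \<mu> t s) \<le> 1 * \<delta> ^ t"
    using discount_pos stdist_nonneg[OF pol mu s] stdist_le_1[OF pol mu s]
    by (simp add: abs_mult mult.commute mult_right_le_one_le)
qed

lemma sum_visit_dist_mult:
  assumes pol: "pol \<in> Pol" and mu: "\<mu> \<in> state_dists m"
  shows "(\<Sum>s<m. vd \<mu> pol s * g s) = (1 - \<delta>) * (\<Sum>t. \<delta> ^ t * (\<Sum>s<m. sd pol \<mu> t s * g s))"
proof -
  have sm: "summable (\<lambda>t. \<delta> ^ t * sd pol \<mu> t s)" if "s \<in> {..<m}" for s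
    using summable_discounted_stdist_at[OF pol mu] that by simp
  have "(\<Sum>s<m. vd \<mu> pol s * g s) = (1 - \<delta>) * (\<Sum>s<m. \<Sum>t. \<delta> ^ t * sd pol \<mu> t s * g s)"
    unfolding visit_dist_def sum_distrib_left
    by (intro sum.cong refl) (simp add: suminf_mult2[OF sm] mult.assoc)
  also have "(\<Sum>s<m. \<Sum>t. \<delta> ^ t * sd pol \<mu> t s * g s) = (\<Sum>t. \<Sum>s<m. \<delta> ^ t * sd pol \<mu> t s * g s)"
    using sm by (intro suminf_sum[symmetric] summable_mult2) auto
  also have "\<dots> = (\<Sum>t. \<delta> ^ t * (\<Sum>s<m. sd pol \<mu> t s * g s))"
    by (simp add: sum_distrib_left mult.assoc)
  finally show ?thesis .
qed

lemma visit_dist_nonneg: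
  assumes pol: "pol \<in> Pol" and mu: "\<mu> \<in> state_dists m" and s: "s < m"
  shows "0 \<le> vd \<mu> pol s"
proof -
  have "0 \<le> (\<Sum>t. \<delta> ^ t * sd pol \<mu> t s)"
    using summable_discounted_stdist_at[OF assms] stdist_nonneg[OF assms] discount_pos
    by (intro suminf_nonneg) auto
  thus ?thesis unfolding visit_dist_def using discount_lt_1 by simp
qed

lemma visit_dist_sum: "pol \<in> Pol \<Longrightarrow> \<mu> \<in> state_dists m \<Longrightarrow> (\<Sum>s<m. vd \<mu> pol s) = 1"
proof -
  assume *: "pol \<in> Pol" "\<mu> \<in> state_dists m"
  have "(\<Sum>s<m. vd \<mu> pol s * 1) = (1 - \<delta>) * (\<Sum>t. \<delta> ^ t * (\<Sum>s<m. sd pol \<mu> t s * 1))"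
    by (rule sum_visit_dist_mult[OF *])
  also have "\<dots> = (1 - \<delta>) * (\<Sum>t. \<delta> ^ t)" using stdist_sum_eq_1[OF *] by simp
  also have "\<dots> = 1" using suminf_geometric[of \<delta>] discount_pos discount_lt_1 by simp
  finally show ?thesis by simp
qed

lemma stdist_fixpoint_unroll:
  assumes D: "\<And>s. s < m \<Longrightarrow> D s = g s + \<delta> * (\<Sum>s1<m. TM pol s s1 * D s1)"
  shows "(\<Sum>s<m. \<mu> s * D s) =
    (\<Sum>t<N. \<delta> ^ t * (\<Sum>s<m. sd pol \<mu> t s * g s)) + \<delta> ^ N * (\<Sum>s<m. sd pol \<mu> N s * D s)"
proof (induction N)
  case 0 thus ?case by simp
next
  case (Suc N)
  have "(\<Sum>s<m. sd pol \<mu> N s * D s)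
      = (\<Sum>s<m. sd pol \<mu> N s * g s + \<delta> * (\<Sum>s1<m. sd pol \<mu> N s * TM pol s s1 * D s1))"
    by (intro sum.cong refl) (simp add: D distrib_left sum_distrib_left mult_ac)
  also have "\<dots> = (\<Sum>s<m. sd pol \<mu> N s * g s) + \<delta> * (\<Sum>s<m. \<Sum>s1<m. sd pol \<mu> N s * TM pol s s1 * D s1)"
    by (simp add: sum.distrib sum_distrib_left)
  also have "(\<Sum>s<m. \<Sum>s1<m. sd pol \<mu> N s * TM pol s s1 * D s1) = (\<Sum>s1<m. sd pol \<mu> (Suc N) s1 * D s1)"
    by (subst sum.swap) (simp add: sum_distrib_right)
  finally show ?case using Suc by (simp add: algebra_simps)
qed

lemma performance_difference:
  assumes pol: "pol \<in> Pol" and mu: "\<mu> \<in> state_dists m"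
    and D: "\<And>s. s < m \<Longrightarrow> D s = g s + \<delta> * (\<Sum>s1<m. TM pol s s1 * D s1)"
    and D_bound: "\<And>s. s < m \<Longrightarrow> \<bar>D s\<bar> \<le> B"
  shows "(\<Sum>s<m. \<mu> s * D s) = (1 / (1 - \<delta>)) * (\<Sum>s<m. vd \<mu> pol s * g s)"
proof -
  define f where "f t = \<delta> ^ t * (\<Sum>s<m. sd pol \<mu> t s * g s)" for t
  have "(\<lambda>N. \<delta> ^ N * (\<Sum>s<m. sd pol \<mu> N s * D s)) \<longlonglongrightarrow> 0"
  proof (rule Lim_null_comparison)
    show "\<forall>\<^sub>F N in sequentially. norm (\<delta> ^ N * (\<Sum>s<m. sd pol \<mu> N s * D s)) \<le> B * \<delta> ^ N"
      using abs_sum_stdist_le[OF pol mu D_bound] discount_pos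
      by (intro always_eventually allI) (simp add: abs_mult mult.commute mult_right_mono)
    show "(\<lambda>N. B * \<delta> ^ N) \<longlonglongrightarrow> 0"
      using discount_pos discount_lt_1 by (intro tendsto_mult_right_zero LIMSEQ_power_zero) auto
  qed
  hence "(\<lambda>N. (\<Sum>s<m. \<mu> s * D s) - \<delta> ^ N * (\<Sum>s<m. sd pol \<mu> N s * D s)) \<longlonglongrightarrow> (\<Sum>s<m. \<mu> s * D s)"
    using tendsto_diff[OF tendsto_const] by fastforce
  moreover have "(\<Sum>s<m. \<mu> s * D s) - \<delta> ^ N * (\<Sum>s<m. sd pol \<mu> N s * D s) = (\<Sum>t<N. f t)" for N
    using stdist_fixpoint_unroll[OF D, of \<mu> N] unfolding f_def by linarith
  ultimately have "f sums (\<Sum>s<m. \<mu> s * D s)" unfolding sums_def by simp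
  hence "suminf f = (\<Sum>s<m. \<mu> s * D s)" by (rule sums_unique[symmetric])
  moreover have "(\<Sum>s<m. vd \<mu> pol s * g s) = (1 - \<delta>) * suminf f"
    unfolding f_def by (rule sum_visit_dist_mult[OF pol mu])
  ultimately show ?thesis using discount_lt_1 by (simp add: field_simps)
qed

section \<open>Q-functions and their sensitivity to the policy\<close>

definition others_prob :: "(nat \<Rightarrow> nat \<Rightarrow> nat \<Rightarrow> real) \<Rightarrow> nat \<Rightarrow> nat \<Rightarrow> (nat \<Rightarrow> nat) \<Rightarrow> real" where
  "others_prob pol i s a = (\<Prod>j\<in>{..<n}-{i}. pol j s (a j))"

definition pure_policy :: "nat \<Rightarrow> nat \<Rightarrow> nat \<Rightarrow> real" where
  "pure_policy b = (\<lambda>s a. if s < m \<and> a = b then 1 else 0)"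

definition policy_dist :: "(nat \<Rightarrow> nat \<Rightarrow> nat \<Rightarrow> real) \<Rightarrow> (nat \<Rightarrow> nat \<Rightarrow> nat \<Rightarrow> real) \<Rightarrow> nat \<Rightarrow> real" where
  "policy_dist \<sigma> \<sigma>' s = (\<Sum>l<n. \<Sum>c<k l. \<bar>\<sigma> l s c - \<sigma>' l s c\<bar>)"

definition switch_first :: "nat \<Rightarrow> (nat \<Rightarrow> nat \<Rightarrow> nat \<Rightarrow> real) \<Rightarrow> (nat \<Rightarrow> nat \<Rightarrow> nat \<Rightarrow> real)
    \<Rightarrow> nat \<Rightarrow> nat \<Rightarrow> nat \<Rightarrow> real" where
  "switch_first l \<sigma> \<sigma>' = (\<lambda>i. if i < l then \<sigma>' i else \<sigma> i)"

lemma switch_first_0 [simp]: "switch_first 0 \<sigma> \<sigma>' = \<sigma>"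
  unfolding switch_first_def by simp

lemma switch_first_Suc: "switch_first (Suc l) \<sigma> \<sigma>' = (switch_first l \<sigma> \<sigma>')(l := \<sigma>' l)"
  unfolding switch_first_def by (rule ext) auto

lemma switch_first_at: "switch_first l \<sigma> \<sigma>' l = \<sigma> l"
  unfolding switch_first_def by simp

lemma policy_dist_nonneg: "0 \<le> policy_dist \<sigma> \<sigma>' s" unfolding policy_dist_def by (intro sum_nonneg) auto

lemma pure_policy_in: "b < K \<Longrightarrow> pure_policy b \<in> player_policies m K"
proof -
  assume b: "b < K"
  have "\<And>s. s < m \<Longrightarrow> (\<Sum>a<K. pure_policy b s a) = 1"
  proof -
    fix s assume "s < m"
    hence "(\<Sum>a<K. pure_policy b s a) = (\<Sum>a<K. if a = b then 1 else 0)" by (intro sum.cong) (auto simp: pure_policy_def)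
    thus "(\<Sum>a<K. pure_policy b s a) = 1" using b by simp
  qed
  thus ?thesis unfolding player_policies_def simplex_def using b by (auto simp: pure_policy_def)
qed

lemma policy_component: "pol \<in> Pol \<Longrightarrow> i < n \<Longrightarrow> pol i \<in> player_policies m (k i)"
  unfolding policies_def by auto

lemma policy_update: "pol \<in> Pol \<Longrightarrow> i < n \<Longrightarrow> p \<in> player_policies m (k i) \<Longrightarrow> pol(i := p) \<in> Pol"
  unfolding policies_def by auto

lemma pjoint_update: "i < n \<Longrightarrow> pj (pol(i := p)) s a = p s (a i) * others_prob pol i s a"
proof -
  assume i: "i < n"
  have "pj (pol(i := p)) s a = (pol(i := p)) i s (a i) * (\<Prod>j\<in>{..<n}-{i}. (pol(i := p)) j s (a j))"
    unfolding pjoint_def using i by (subst prod.remove[of _ i]) auto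
  also have "(\<Prod>j\<in>{..<n}-{i}. (pol(i := p)) j s (a j)) = others_prob pol i s a"
    unfolding others_prob_def by (intro prod.cong) auto
  finally show ?thesis by (simp only: fun_upd_same)
qed

lemma pjoint_split: "i < n \<Longrightarrow> pj pol s a = pol i s (a i) * others_prob pol i s a"
  using pjoint_update[of i pol "pol i" s a] by simp

lemma others_prob_nonneg: "pol \<in> Pol \<Longrightarrow> s < m \<Longrightarrow> a \<in> JA \<Longrightarrow> 0 \<le> others_prob pol i s a"
  unfolding others_prob_def by (intro prod_nonneg) (auto intro: policy_nonneg JA_less)

lemma sum_JA_group: "i < n \<Longrightarrow> (\<Sum>a\<in>JA. G a) = (\<Sum>b<k i. \<Sum>a\<in>{a\<in>JA. a i = b}. G a)"
  by (rule sum.group[symmetric]) (auto simp: finite_JA JA_less)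

lemma others_prob_sum:
  assumes pol: "pol \<in> Pol" and i: "i < n" and s: "s < m" and b: "b < k i"
  shows "(\<Sum>a\<in>{a\<in>JA. a i = b}. others_prob pol i s a) = 1"
proof -
  have "(\<Sum>a\<in>{a\<in>JA. a i = b}. others_prob pol i s a) = (\<Sum>a\<in>JA. if a i = b then others_prob pol i s a else 0)"
    using finite_JA by (rule sum.inter_filter)
  also have "\<dots> = (\<Sum>a\<in>JA. pj (pol(i := pure_policy b)) s a)"
    using s by (intro sum.cong refl) (auto simp: pjoint_update[OF i] pure_policy_def)
  also have "\<dots> = 1" using pjoint_sum policy_update[OF pol i pure_policy_in[OF b]] s by auto
  finally show ?thesis .
qed

lemma sum_JA_marginal:
  assumes pol: "pol \<in> Pol" and i: "i < n" and s: "s < m"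
  shows "(\<Sum>a\<in>JA. F (a i) * others_prob pol i s a) = (\<Sum>b<k i. F b)"
proof -
  have "(\<Sum>a\<in>JA. F (a i) * others_prob pol i s a) = (\<Sum>b<k i. \<Sum>a\<in>{a\<in>JA. a i = b}. F (a i) * others_prob pol i s a)"
    by (rule sum_JA_group[OF i])
  also have "\<dots> = (\<Sum>b<k i. F b * (\<Sum>a\<in>{a\<in>JA. a i = b}. others_prob pol i s a))"
    by (intro sum.cong refl) (auto simp: sum_distrib_left)
  also have "\<dots> = (\<Sum>b<k i. F b)"
    using others_prob_sum[OF pol i s] by (intro sum.cong) auto
  finally show ?thesis .
qed

lemma Q_fn_others_prob: "Q i pol s b = (\<Sum>a\<in>{a\<in>JA. a i = b}. others_prob pol i s a * action_value pol i s a)"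
  unfolding Q_fn_def others_prob_def action_value_def by simp

lemma pjoint_update_diff:
  assumes pol: "pol \<in> Pol" and i: "i < n" and s: "s < m"
  shows "(\<Sum>a\<in>JA. (pj (pol(i := p)) s a - pj pol s a) * action_value pol i s a) = (\<Sum>b<k i. (p s b - pol i s b) * Q i pol s b)"
proof -
  have "(\<Sum>a\<in>JA. (pj (pol(i := p)) s a - pj pol s a) * action_value pol i s a)
      = (\<Sum>a\<in>JA. (p s (a i) - pol i s (a i)) * (others_prob pol i s a * action_value pol i s a))"
    by (intro sum.cong refl) (simp add: pjoint_update[OF i] pjoint_split[OF i, of pol] algebra_simps)
  also have "\<dots> = (\<Sum>b<k i. \<Sum>a\<in>{a\<in>JA. a i = b}. (p s (a i) - pol i s (a i)) * (others_prob pol i s a * action_value pol i s a))"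
    by (rule sum_JA_group[OF i])
  also have "\<dots> = (\<Sum>b<k i. (p s b - pol i s b) * Q i pol s b)"
    unfolding Q_fn_others_prob by (intro sum.cong refl) (auto simp: sum_distrib_left)
  finally show ?thesis .
qed

lemma Q_fn_bounds:
  assumes pol: "pol \<in> Pol" and i: "i < n" and s: "s < m" and b: "b < k i"
  shows "0 \<le> Q i pol s b \<and> Q i pol s b \<le> 1 / (1 - \<delta>)"
proof -
  have "Q i pol s b \<le> (\<Sum>a\<in>{a\<in>JA. a i = b}. others_prob pol i s a * (1 / (1 - \<delta>)))"
    unfolding Q_fn_others_prob using action_value_bounds[OF pol i s] others_prob_nonneg[OF pol s] by (intro sum_mono mult_left_mono) auto
  also have "\<dots> = 1 / (1 - \<delta>)" using others_prob_sum[OF assms] by (simp add: sum_divide_distrib[symmetric])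
  finally have "Q i pol s b \<le> 1 / (1 - \<delta>)" .
  moreover have "0 \<le> Q i pol s b"
    unfolding Q_fn_others_prob using action_value_bounds[OF pol i s] others_prob_nonneg[OF pol s] by (intro sum_nonneg mult_nonneg_nonneg) auto
  ultimately show ?thesis by simp
qed

lemma Q_fn_pure_policy:
  assumes i: "i < n" and s: "s < m"
  shows "Q i pol s b = (\<Sum>a\<in>JA. pj (pol(i := pure_policy b)) s a * action_value pol i s a)"
proof -
  have "Q i pol s b = (\<Sum>a\<in>JA. if a i = b then others_prob pol i s a * action_value pol i s a else 0)"
    unfolding Q_fn_others_prob using finite_JA by (rule sum.inter_filter)
  also have "\<dots> = (\<Sum>a\<in>JA. pj (pol(i := pure_policy b)) s a * action_value pol i s a)"
    using s by (intro sum.cong refl) (auto simp: pjoint_update[OF i] pure_policy_def)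
  finally show ?thesis .
qed

lemma switch_first_policy:
  "\<sigma> \<in> Pol \<Longrightarrow> \<sigma>' \<in> Pol \<Longrightarrow> switch_first l \<sigma> \<sigma>' \<in> Pol"
  unfolding policies_def switch_first_def by auto

lemma switch_first_n: "\<sigma> \<in> Pol \<Longrightarrow> \<sigma>' \<in> Pol \<Longrightarrow> switch_first n \<sigma> \<sigma>' = \<sigma>'"
  unfolding policies_def switch_first_def by (rule ext) auto

lemma sum_abs_pjoint_update_diff:
  assumes pol: "pol \<in> Pol" and i: "i < n" and s: "s < m"
  shows "(\<Sum>a\<in>JA. \<bar>pj pol s a - pj (pol(i := p)) s a\<bar>) = (\<Sum>c<k i. \<bar>pol i s c - p s c\<bar>)"
proof -
  have "(\<Sum>a\<in>JA. \<bar>pj pol s a - pj (pol(i := p)) s a\<bar>)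
      = (\<Sum>a\<in>JA. \<bar>pol i s (a i) - p s (a i)\<bar> * others_prob pol i s a)"
    using others_prob_nonneg[OF pol s]
    by (intro sum.cong refl)
      (simp add: pjoint_split[OF i, of pol] pjoint_update[OF i] left_diff_distrib[symmetric] abs_mult)
  also have "\<dots> = (\<Sum>c<k i. \<bar>pol i s c - p s c\<bar>)" by (rule sum_JA_marginal[OF pol i s])
  finally show ?thesis .
qed

text \<open>Switch the players to \<open>\<sigma>'\<close> one at a time; each switch costs that player's l1 distance.\<close>

lemma sum_abs_pjoint_diff_le:
  assumes \<sigma>: "\<sigma> \<in> Pol" and \<sigma>': "\<sigma>' \<in> Pol" and s: "s < m"
  shows "(\<Sum>a\<in>JA. \<bar>pj \<sigma> s a - pj \<sigma>' s a\<bar>) \<le> policy_dist \<sigma> \<sigma>' s"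
proof -
  let ?sw = "\<lambda>l. switch_first l \<sigma> \<sigma>'"
  have "l \<le> n \<Longrightarrow> (\<Sum>a\<in>JA. \<bar>pj \<sigma> s a - pj (?sw l) s a\<bar>) \<le> (\<Sum>i<l. \<Sum>c<k i. \<bar>\<sigma> i s c - \<sigma>' i s c\<bar>)" for l
  proof (induction l)
    case 0 thus ?case by simp
  next
    case (Suc l)
    hence l: "l < n" by simp
    have "(\<Sum>a\<in>JA. \<bar>pj \<sigma> s a - pj (?sw (Suc l)) s a\<bar>)
        \<le> (\<Sum>a\<in>JA. \<bar>pj \<sigma> s a - pj (?sw l) s a\<bar> + \<bar>pj (?sw l) s a - pj (?sw (Suc l)) s a\<bar>)"
      by (intro sum_mono) linarith
    also have "\<dots> = (\<Sum>a\<in>JA. \<bar>pj \<sigma> s a - pj (?sw l) s a\<bar>) + (\<Sum>c<k l. \<bar>\<sigma> l s c - \<sigma>' l s c\<bar>)"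
      using sum_abs_pjoint_update_diff[OF switch_first_policy[OF \<sigma> \<sigma>'] l s, of l "\<sigma>' l"]
      by (simp add: sum.distrib switch_first_Suc switch_first_at)
    also have "\<dots> \<le> (\<Sum>i<l. \<Sum>c<k i. \<bar>\<sigma> i s c - \<sigma>' i s c\<bar>) + (\<Sum>c<k l. \<bar>\<sigma> l s c - \<sigma>' l s c\<bar>)"
      using Suc l by simp
    finally show ?case by simp
  qed
  thus ?thesis using switch_first_n[OF \<sigma> \<sigma>'] unfolding policy_dist_def by force
qed

lemma abs_sum_pjoint_diff_action_value_le:
  assumes \<sigma>: "\<sigma> \<in> Pol" and \<sigma>': "\<sigma>' \<in> Pol" and pol: "pol \<in> Pol" and i: "i < n" and s: "s < m"
    and B: "policy_dist \<sigma> \<sigma>' s \<le> B"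
  shows "\<bar>\<Sum>a\<in>JA. (pj \<sigma> s a - pj \<sigma>' s a) * action_value pol i s a\<bar> \<le> B / (1 - \<delta>)"
proof -
  have "\<bar>\<Sum>a\<in>JA. (pj \<sigma> s a - pj \<sigma>' s a) * action_value pol i s a\<bar>
      \<le> (\<Sum>a\<in>JA. \<bar>pj \<sigma> s a - pj \<sigma>' s a\<bar> * (1 / (1 - \<delta>)))"
  proof (intro order_trans[OF sum_abs] sum_mono)
    fix a assume "a \<in> JA"
    thus "\<bar>(pj \<sigma> s a - pj \<sigma>' s a) * action_value pol i s a\<bar> \<le> \<bar>pj \<sigma> s a - pj \<sigma>' s a\<bar> * (1 / (1 - \<delta>))"
      using action_value_bounds[OF pol i s] unfolding abs_mult by (intro mult_left_mono) auto
  qed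
  also have "\<dots> = (\<Sum>a\<in>JA. \<bar>pj \<sigma> s a - pj \<sigma>' s a\<bar>) / (1 - \<delta>)" by (simp add: sum_divide_distrib)
  also have "\<dots> \<le> B / (1 - \<delta>)" using sum_abs_pjoint_diff_le[OF \<sigma> \<sigma>' s] B discount_lt_1
    by (intro divide_right_mono) auto
  finally show ?thesis .
qed

lemma abs_value_diff_le:
  assumes pol: "pol \<in> Pol" and pol': "pol' \<in> Pol" and i: "i < n"
    and B: "\<And>s'. s' < m \<Longrightarrow> policy_dist pol pol' s' \<le> B" and s: "s < m"
  shows "\<bar>V i pol s - V i pol' s\<bar> \<le> B / (1 - \<delta>)^2"
proof -
  have "\<bar>V i pol s - V i pol' s\<bar> \<le> B / (1 - \<delta>) / (1 - \<delta>)"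
  proof (rule discounted_fixpoint_abs_bound
      [OF discount_nonneg discount_lt_1 trans_mat_nonneg[OF pol] trans_mat_sum[OF pol] _ _ s])
    fix s assume s: "s < m"
    show "V i pol s - V i pol' s = (\<Sum>a\<in>JA. (pj pol s a - pj pol' s a) * action_value pol' i s a)
        + \<delta> * (\<Sum>s1<m. TM pol s s1 * (V i pol s1 - V i pol' s1))"
      by (rule value_diff_recursion[OF pol' pol i s])
    show "\<bar>\<Sum>a\<in>JA. (pj pol s a - pj pol' s a) * action_value pol' i s a\<bar> \<le> B / (1 - \<delta>)"
      by (rule abs_sum_pjoint_diff_action_value_le[OF pol pol' pol' i s B[OF s]])
  qed
  thus ?thesis by (simp add: power2_eq_square)
qed

lemma abs_action_value_diff_le:
  assumes pol: "pol \<in> Pol" and pol': "pol' \<in> Pol" and j: "j < n" and s: "s < m" and a: "a \<in> JA"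
    and B: "\<And>s'. s' < m \<Longrightarrow> policy_dist pol pol' s' \<le> B"
  shows "\<bar>action_value pol j s a - action_value pol' j s a\<bar> \<le> \<delta> * (B / (1 - \<delta>)^2)"
proof -
  have "\<bar>\<Sum>s1<m. P s a s1 * (V j pol s1 - V j pol' s1)\<bar> \<le> (\<Sum>s1<m. P s a s1 * (B / (1 - \<delta>)^2))"
  proof (intro order_trans[OF sum_abs] sum_mono)
    fix s1 assume s1: "s1 \<in> {..<m}"
    hence "0 \<le> P s a s1" "\<bar>V j pol s1 - V j pol' s1\<bar> \<le> B / (1 - \<delta>)^2"
      using P_stochastic s a abs_value_diff_le[OF pol pol' j B] by auto
    thus "\<bar>P s a s1 * (V j pol s1 - V j pol' s1)\<bar> \<le> P s a s1 * (B / (1 - \<delta>)^2)"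
      by (metis abs_mult abs_of_nonneg mult_left_mono)
  qed
  also have "\<dots> = B / (1 - \<delta>)^2"
    using P_stochastic s a by (simp only: sum_distrib_right[symmetric])
  finally have "\<bar>\<Sum>s1<m. P s a s1 * (V j pol s1 - V j pol' s1)\<bar> \<le> B / (1 - \<delta>)^2" .
  moreover have "action_value pol j s a - action_value pol' j s a
      = \<delta> * (\<Sum>s1<m. P s a s1 * (V j pol s1 - V j pol' s1))"
    unfolding action_value_def by (simp add: sum_subtractf right_diff_distrib)
  ultimately show ?thesis
    using mult_left_mono[OF _ discount_nonneg] by (simp only: abs_mult abs_of_nonneg[OF discount_nonneg])
qed

lemma abs_Q_fn_diff_le:
  assumes pol: "pol \<in> Pol" and pol': "pol' \<in> Pol" and j: "j < n" and s: "s < m" and b: "b < k j"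
    and same: "pol j = pol' j" and B: "\<And>s'. s' < m \<Longrightarrow> policy_dist pol pol' s' \<le> B"
  shows "\<bar>Q j pol s b - Q j pol' s b\<bar> \<le> 2 * B / (1 - \<delta>)^2"
proof -
  define \<sigma> where "\<sigma> = pol(j := pure_policy b)"
  define \<sigma>' where "\<sigma>' = pol'(j := pure_policy b)"
  have \<sigma>_in: "\<sigma> \<in> Pol" "\<sigma>' \<in> Pol" unfolding \<sigma>_def \<sigma>'_def
    using policy_update pure_policy_in[OF b] pol pol' j by auto
  have "policy_dist \<sigma> \<sigma>' s = policy_dist pol pol' s"
    unfolding policy_dist_def \<sigma>_def \<sigma>'_def using same by (intro sum.cong refl) auto
  hence first: "\<bar>\<Sum>a\<in>JA. (pj \<sigma> s a - pj \<sigma>' s a) * action_value pol j s a\<bar> \<le> B / (1 - \<delta>)"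
    using abs_sum_pjoint_diff_action_value_le[OF \<sigma>_in pol j s] B[OF s] by simp
  have "\<bar>\<Sum>a\<in>JA. pj \<sigma>' s a * (action_value pol j s a - action_value pol' j s a)\<bar>
      \<le> (\<Sum>a\<in>JA. pj \<sigma>' s a * (\<delta> * (B / (1 - \<delta>)^2)))"
  proof (intro order_trans[OF sum_abs] sum_mono)
    fix a assume a: "a \<in> JA"
    hence "0 \<le> pj \<sigma>' s a"
      "\<bar>action_value pol j s a - action_value pol' j s a\<bar> \<le> \<delta> * (B / (1 - \<delta>)^2)"
      using abs_action_value_diff_le[OF pol pol' j s a B] pjoint_nonneg[OF \<sigma>_in(2) s] by auto
    thus "\<bar>pj \<sigma>' s a * (action_value pol j s a - action_value pol' j s a)\<bar> \<le> pj \<sigma>' s a * (\<delta> * (B / (1 - \<delta>)^2))"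
      by (metis abs_mult abs_of_nonneg mult_left_mono)
  qed
  also have "\<dots> = \<delta> * (B / (1 - \<delta>)^2)"
    using pjoint_sum[OF \<sigma>_in(2) s] by (simp only: sum_distrib_right[symmetric] mult_1)
  finally have second: "\<bar>\<Sum>a\<in>JA. pj \<sigma>' s a * (action_value pol j s a - action_value pol' j s a)\<bar>
      \<le> \<delta> * (B / (1 - \<delta>)^2)" .
  have B0: "0 \<le> B" using B[OF s] policy_dist_nonneg[of pol pol' s] by linarith
  have "(1 - \<delta>)^2 \<le> 1 - \<delta>"
    using discount_pos discount_lt_1 by (simp add: power2_eq_square mult_left_le_one_le)
  hence "B / (1 - \<delta>) \<le> B / (1 - \<delta>)^2" using B0 discount_lt_1 by (intro divide_left_mono) auto
  moreover have "\<delta> * (B / (1 - \<delta>)^2) \<le> B / (1 - \<delta>)^2"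
    using discount_nonneg discount_lt_1 B0 by (intro mult_left_le_one_le) auto
  moreover have "Q j pol s b - Q j pol' s b = (\<Sum>a\<in>JA. (pj \<sigma> s a - pj \<sigma>' s a) * action_value pol j s a)
      + (\<Sum>a\<in>JA. pj \<sigma>' s a * (action_value pol j s a - action_value pol' j s a))"
    unfolding Q_fn_pure_policy[OF j s] \<sigma>_def \<sigma>'_def
    by (simp add: sum_subtractf[symmetric] sum.distrib[symmetric] algebra_simps)
  hence "\<bar>Q j pol s b - Q j pol' s b\<bar> \<le> \<bar>\<Sum>a\<in>JA. (pj \<sigma> s a - pj \<sigma>' s a) * action_value pol j s a\<bar>
      + \<bar>\<Sum>a\<in>JA. pj \<sigma>' s a * (action_value pol j s a - action_value pol' j s a)\<bar>"
    by (simp only: abs_triangle_ineq)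
  ultimately show ?thesis using first second by linarith
qed

section \<open>One step of projected gradient ascent\<close>

abbreviation "Amax \<equiv> Max (k ` {..<n})"

lemma k_le_Amax: "i < n \<Longrightarrow> k i \<le> Amax" by (intro Max_ge) auto

lemma Amax_ge_1: "Amax \<ge> 1"
proof -
  have "k 0 \<le> Amax" using k_le_Amax n_pos by auto
  moreover have "k 0 \<ge> 1" using k_pos n_pos by auto
  ultimately show ?thesis by linarith
qed

abbreviation "pg \<eta> t \<equiv> pga n m k u P \<delta> \<eta> t"

lemma pga_policy: "pg \<eta> t \<in> Pol"
proof (cases t)
  case 0
  have "(\<Sum>a<k i. 1 / real (k i)) = 1" if "i < n" for i
  proof -
    have "k i \<ge> 1" using k_pos that by simp
    thus ?thesis by simp
  qed
  thus ?thesis using 0 unfolding policies_def player_policies_def simplex_def by auto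
next
  case (Suc t')
  thus ?thesis using k_pos proj_simplex_char(1)
    unfolding policies_def player_policies_def by (auto simp: fun_eq_iff)
qed

lemma pga_simplex: "i < n \<Longrightarrow> s < m \<Longrightarrow> pg \<eta> t i s \<in> simplex (k i)"
  using pga_policy[of \<eta> t] unfolding policies_def player_policies_def by auto

lemma pga_variational:
  assumes i: "i < n" and s: "s < m" and z: "z \<in> simplex (k i)"
  shows "(\<Sum>b<k i. (z b - pg \<eta> (Suc t) i s b)
           * (pg \<eta> (Suc t) i s b - (pg \<eta> t i s b + \<eta> * Q i (pg \<eta> t) s b))) \<ge> 0"
  using proj_simplex_char(2)[OF _ z] k_pos i s by simp

definition step_sq :: "real \<Rightarrow> nat \<Rightarrow> nat \<Rightarrow> nat \<Rightarrow> real" where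
  "step_sq \<eta> t i s = (\<Sum>b<k i. (pg \<eta> (Suc t) i s b - pg \<eta> t i s b)^2)"

lemma step_sq_nonneg: "0 \<le> step_sq \<eta> t i s" unfolding step_sq_def by (intro sum_nonneg) auto

lemma step_sq_le_ascent:
  assumes i: "i < n" and s: "s < m"
  shows "step_sq \<eta> t i s \<le> \<eta> * (\<Sum>b<k i. (pg \<eta> (Suc t) i s b - pg \<eta> t i s b) * Q i (pg \<eta> t) s b)"
proof -
  have "0 \<le> (\<Sum>b<k i. (pg \<eta> t i s b - pg \<eta> (Suc t) i s b) * (pg \<eta> (Suc t) i s b - (pg \<eta> t i s b + \<eta> * Q i (pg \<eta> t) s b)))"
    by (rule pga_variational[OF i s pga_simplex[OF i s]])
  also have "\<dots> = \<eta> * (\<Sum>b<k i. (pg \<eta> (Suc t) i s b - pg \<eta> t i s b) * Q i (pg \<eta> t) s b) - step_sq \<eta> t i s"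
    unfolding step_sq_def by (simp add: sum_distrib_left sum_subtractf[symmetric] power2_eq_square algebra_simps)
  finally show ?thesis by simp
qed

lemma sum_sq_Q_fn_le:
  assumes i: "i < n" and s: "s < m"
  shows "(\<Sum>b<k i. (Q i (pg \<eta> t) s b)^2) \<le> real (k i) / (1 - \<delta>)^2"
proof -
  have "(\<Sum>b<k i. (Q i (pg \<eta> t) s b)^2) \<le> (\<Sum>b<k i. (1 / (1 - \<delta>))^2)"
    using Q_fn_bounds[OF pga_policy i s] by (intro sum_mono power_mono) auto
  thus ?thesis by (simp add: power_divide)
qed

lemma sqrt_sum_sq_Q_fn_le:
  assumes i: "i < n" and s: "s < m"
  shows "sqrt (\<Sum>b<k i. (Q i (pg \<eta> t) s b)^2) \<le> sqrt (real Amax) / (1 - \<delta>)"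
proof -
  have "sqrt (\<Sum>b<k i. (Q i (pg \<eta> t) s b)^2) \<le> sqrt (real (k i) / (1 - \<delta>)^2)"
    by (intro real_sqrt_le_mono sum_sq_Q_fn_le[OF i s])
  also have "\<dots> = sqrt (real (k i)) / (1 - \<delta>)" using discount_lt_1 by (simp add: real_sqrt_divide)
  also have "\<dots> \<le> sqrt (real Amax) / (1 - \<delta>)" using k_le_Amax[OF i] discount_lt_1
    by (intro divide_right_mono) auto
  finally show ?thesis .
qed

lemma step_sq_le:
  assumes i: "i < n" and s: "s < m" and eta: "\<eta> > 0"
  shows "step_sq \<eta> t i s \<le> \<eta>^2 * real (k i) / (1 - \<delta>)^2"
proof -
  define q where "q = (\<Sum>b<k i. (Q i (pg \<eta> t) s b)^2)"
  have "step_sq \<eta> t i s \<le> \<eta> * (sqrt (step_sq \<eta> t i s) * sqrt q)"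
    using step_sq_le_ascent[OF i s, of \<eta> t] eta
      abs_sum_mult_le_sqrt[of "\<lambda>b. pg \<eta> (Suc t) i s b - pg \<eta> t i s b" "\<lambda>b. Q i (pg \<eta> t) s b" "{..<k i}"]
    unfolding step_sq_def q_def by (smt (verit) mult_left_mono)
  hence "step_sq \<eta> t i s \<le> (\<eta> * sqrt q)^2"
    using step_sq_nonneg eta by (intro le_mult_sqrt_imp_le_sq) (auto simp: mult_ac q_def sum_nonneg)
  also have "\<dots> = \<eta>^2 * q" unfolding q_def by (simp add: power_mult_distrib sum_nonneg)
  also have "\<dots> \<le> \<eta>^2 * (real (k i) / (1 - \<delta>)^2)" unfolding q_def
    by (intro mult_left_mono sum_sq_Q_fn_le[OF i s]) auto
  finally show ?thesis by simp
qed

lemma step_l1_le: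
  assumes i: "i < n" and s: "s < m" and eta: "\<eta> > 0"
  shows "(\<Sum>b<k i. \<bar>pg \<eta> (Suc t) i s b - pg \<eta> t i s b\<bar>) \<le> \<eta> * real Amax / (1 - \<delta>)"
proof -
  define x where "x = (\<Sum>b<k i. \<bar>pg \<eta> (Suc t) i s b - pg \<eta> t i s b\<bar>)"
  have "x^2 = (\<Sum>b<k i. 1 * \<bar>pg \<eta> (Suc t) i s b - pg \<eta> t i s b\<bar>)^2" unfolding x_def by simp
  also have "\<dots> \<le> (\<Sum>b<k i. 1^2) * (\<Sum>b<k i. \<bar>pg \<eta> (Suc t) i s b - pg \<eta> t i s b\<bar>^2)"
    by (rule Cauchy_Schwarz_ineq_sum)
  also have "\<dots> = real (k i) * step_sq \<eta> t i s" unfolding step_sq_def by simp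
  also have "\<dots> \<le> real (k i) * (\<eta>^2 * real (k i) / (1 - \<delta>)^2)"
    by (intro mult_left_mono step_sq_le[OF i s eta]) auto
  also have "\<dots> \<le> (\<eta> * real Amax / (1 - \<delta>))^2"
  proof -
    have "real (k i) * real (k i) \<le> real Amax * real Amax"
      using k_le_Amax[OF i] by (intro mult_mono) auto
    hence "real (k i) * real (k i) * (\<eta>^2 / (1 - \<delta>)^2) \<le> real Amax * real Amax * (\<eta>^2 / (1 - \<delta>)^2)"
      by (intro mult_right_mono) auto
    thus ?thesis by (simp add: power_divide power_mult_distrib power2_eq_square mult_ac)
  qed
  finally have "x^2 \<le> (\<eta> * real Amax / (1 - \<delta>))^2" .
  moreover have "0 \<le> \<eta> * real Amax / (1 - \<delta>)" using eta discount_lt_1 by simp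
  ultimately have "x \<le> \<eta> * real Amax / (1 - \<delta>)" using power2_le_imp_le by blast
  thus ?thesis unfolding x_def .
qed

lemma Q_fn_gain_le_step:
  assumes i: "i < n" and s: "s < m" and eta: "\<eta> > 0" and z: "z \<in> simplex (k i)"
    and small: "\<eta> * sqrt (real Amax) / (1 - \<delta>) \<le> 1"
  shows "\<eta> * (\<Sum>b<k i. (z b - pg \<eta> t i s b) * Q i (pg \<eta> t) s b) \<le> 3 * sqrt (step_sq \<eta> t i s)"
proof -
  define y where "y = pg \<eta> (Suc t) i s"
  define x where "x = pg \<eta> t i s"
  define q where "q = Q i (pg \<eta> t) s"
  have VI: "0 \<le> (\<Sum>b<k i. (z b - y b) * (y b - x b)) - \<eta> * (\<Sum>b<k i. (z b - y b) * q b)"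
    using pga_variational[OF i s z, of \<eta> t] unfolding y_def x_def q_def
    by (simp add: sum_distrib_left sum_subtractf[symmetric] algebra_simps)
  have c1: "(\<Sum>b<k i. (z b - y b) * (y b - x b)) \<le> sqrt 2 * sqrt (step_sq \<eta> t i s)"
  proof -
    have "(\<Sum>b<k i. (z b - y b) * (y b - x b)) \<le> sqrt (\<Sum>b<k i. (z b - y b)^2) * sqrt (step_sq \<eta> t i s)"
      using abs_sum_mult_le_sqrt[of "\<lambda>b. z b - y b" "\<lambda>b. y b - x b" "{..<k i}"] unfolding step_sq_def y_def x_def by linarith
    also have "\<dots> \<le> sqrt 2 * sqrt (step_sq \<eta> t i s)"
      using simplex_sum_sq_diff_le_2[OF z] pga_simplex[OF i s, of \<eta> "Suc t"] step_sq_nonneg unfolding y_def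
      by (intro mult_right_mono) auto
    finally show ?thesis .
  qed
  have c2: "\<eta> * (\<Sum>b<k i. (y b - x b) * q b) \<le> sqrt (step_sq \<eta> t i s)"
  proof -
    have "(\<Sum>b<k i. (y b - x b) * q b) \<le> sqrt (step_sq \<eta> t i s) * sqrt (\<Sum>b<k i. (q b)^2)"
      using abs_sum_mult_le_sqrt[of "\<lambda>b. y b - x b" q "{..<k i}"] unfolding step_sq_def y_def x_def by linarith
    also have "\<dots> \<le> sqrt (step_sq \<eta> t i s) * (sqrt (real Amax) / (1 - \<delta>))"
      unfolding q_def using sqrt_sum_sq_Q_fn_le[OF i s] step_sq_nonneg by (intro mult_left_mono) auto
    finally have "\<eta> * (\<Sum>b<k i. (y b - x b) * q b) \<le> \<eta> * (sqrt (step_sq \<eta> t i s) * (sqrt (real Amax) / (1 - \<delta>)))"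
      using eta by (intro mult_left_mono) auto
    also have "\<dots> = sqrt (step_sq \<eta> t i s) * (\<eta> * sqrt (real Amax) / (1 - \<delta>))" by simp
    also have "\<dots> \<le> sqrt (step_sq \<eta> t i s) * 1" using small step_sq_nonneg by (intro mult_left_mono) auto
    finally show ?thesis by simp
  qed
  have split: "(\<Sum>b<k i. (z b - x b) * q b) = (\<Sum>b<k i. (z b - y b) * q b) + (\<Sum>b<k i. (y b - x b) * q b)"
    by (simp add: sum.distrib[symmetric] algebra_simps)
  have "sqrt 2 \<le> sqrt (2^2)" by (rule real_sqrt_le_mono) simp
  hence "sqrt 2 \<le> 2" by simp
  hence "sqrt 2 * sqrt (step_sq \<eta> t i s) \<le> 2 * sqrt (step_sq \<eta> t i s)" using step_sq_nonneg by (intro mult_right_mono) auto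
  thus ?thesis using VI c1 c2 split unfolding x_def q_def by (simp add: distrib_left)
qed

section \<open>Increase of the potential along the iterates\<close>

abbreviation "hybrid \<eta> t j \<equiv> switch_first j (pg \<eta> t) (pg \<eta> (Suc t))"

lemma hybrid_policy: "hybrid \<eta> t j \<in> Pol"
  by (intro switch_first_policy pga_policy)

lemma policy_dist_hybrid_le:
  assumes eta: "\<eta> > 0" and s: "s < m"
  shows "policy_dist (hybrid \<eta> t j) (pg \<eta> t) s \<le> real n * (\<eta> * real Amax / (1 - \<delta>))"
proof -
  have "policy_dist (hybrid \<eta> t j) (pg \<eta> t) s \<le> (\<Sum>l<n. \<eta> * real Amax / (1 - \<delta>))"
    unfolding policy_dist_def
  proof (rule sum_mono)
    fix l assume l: "l \<in> {..<n}"
    show "(\<Sum>c<k l. \<bar>hybrid \<eta> t j l s c - pg \<eta> t l s c\<bar>) \<le> \<eta> * real Amax / (1 - \<delta>)"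
    proof (cases "l < j")
      case True thus ?thesis using step_l1_le[of l s \<eta> t] l s eta by (simp add: switch_first_def)
    next
      case False thus ?thesis using eta discount_lt_1 by (simp add: switch_first_def)
    qed
  qed
  thus ?thesis by simp
qed

text \<open>When player j moves, the players before it have already moved, so j's ascent direction
  is evaluated at the hybrid policy rather than at the current iterate; this costs \<open>lag_error\<close>.\<close>

definition lag_error :: "real \<Rightarrow> real" where
  "lag_error \<eta> = 2 * real n * (\<eta> * real Amax / (1 - \<delta>))^2 / (1 - \<delta>)^3"

lemma hybrid_gain_lower_bound:
  assumes eta: "\<eta> > 0" and j: "j < n" and s: "s < m"
  shows "(\<Sum>b<k j. (pg \<eta> (Suc t) j s b - pg \<eta> t j s b) * Q j (hybrid \<eta> t j) s b)
    \<ge> step_sq \<eta> t j s / \<eta> - 2 * real n * (\<eta> * real Amax / (1 - \<delta>))^2 / (1 - \<delta>)^2"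
proof -
  define \<pi> where "\<pi> = pg \<eta> t"
  define \<pi>' where "\<pi>' = pg \<eta> (Suc t)"
  define H where "H = hybrid \<eta> t j"
  define \<beta> where "\<beta> = \<eta> * real Amax / (1 - \<delta>)"
  define E where "E = 2 * (real n * \<beta>) / (1 - \<delta>)^2"
  have E0: "0 \<le> E" unfolding E_def \<beta>_def using eta discount_lt_1 by simp
  have Qd: "\<bar>Q j H s b - Q j \<pi> s b\<bar> \<le> E" if b: "b < k j" for b
    using abs_Q_fn_diff_le[OF hybrid_policy pga_policy j s b switch_first_at policy_dist_hybrid_le[OF eta]]
    unfolding E_def H_def \<pi>_def \<beta>_def by simp
  have "\<bar>\<Sum>b<k j. (\<pi>' j s b - \<pi> j s b) * (Q j H s b - Q j \<pi> s b)\<bar> \<le> (\<Sum>b<k j. \<bar>\<pi>' j s b - \<pi> j s b\<bar> * E)"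
  proof (intro order_trans[OF sum_abs] sum_mono)
    fix b assume "b \<in> {..<k j}"
    thus "\<bar>(\<pi>' j s b - \<pi> j s b) * (Q j H s b - Q j \<pi> s b)\<bar> \<le> \<bar>\<pi>' j s b - \<pi> j s b\<bar> * E"
      using Qd unfolding abs_mult by (intro mult_left_mono) auto
  qed
  also have "\<dots> = (\<Sum>b<k j. \<bar>\<pi>' j s b - \<pi> j s b\<bar>) * E" by (rule sum_distrib_right[symmetric])
  also have "\<dots> \<le> \<beta> * E" using step_l1_le[OF j s eta, of t] E0 unfolding \<beta>_def \<pi>_def \<pi>'_def
    by (intro mult_right_mono) auto
  finally have "\<bar>\<Sum>b<k j. (\<pi>' j s b - \<pi> j s b) * (Q j H s b - Q j \<pi> s b)\<bar> \<le> \<beta> * E" .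
  moreover have "(\<Sum>b<k j. (\<pi>' j s b - \<pi> j s b) * Q j \<pi> s b) \<ge> step_sq \<eta> t j s / \<eta>"
    using step_sq_le_ascent[OF j s, of \<eta> t] eta unfolding \<pi>_def \<pi>'_def by (simp add: field_simps)
  moreover have "(\<Sum>b<k j. (\<pi>' j s b - \<pi> j s b) * Q j H s b) = (\<Sum>b<k j. (\<pi>' j s b - \<pi> j s b) * Q j \<pi> s b)
      + (\<Sum>b<k j. (\<pi>' j s b - \<pi> j s b) * (Q j H s b - Q j \<pi> s b))"
    by (simp add: sum.distrib[symmetric] algebra_simps)
  moreover have "\<beta> * E = 2 * real n * \<beta>^2 / (1 - \<delta>)^2" unfolding E_def by (simp add: power2_eq_square)
  ultimately show ?thesis unfolding H_def \<pi>_def \<pi>'_def \<beta>_def by linarith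
qed

lemma value_increase_player:
  assumes eta: "\<eta> > 0" and j: "j < n" and s0: "s0 < m"
  shows "V j (hybrid \<eta> t (Suc j)) s0 - V j (hybrid \<eta> t j) s0 \<ge> step_sq \<eta> t j s0 / \<eta> - lag_error \<eta>"
proof -
  define H where "H = hybrid \<eta> t j"
  define H' where "H' = hybrid \<eta> t (Suc j)"
  define e where "e = 2 * real n * (\<eta> * real Amax / (1 - \<delta>))^2 / (1 - \<delta>)^2"
  define g where "g s = (\<Sum>b<k j. (pg \<eta> (Suc t) j s b - pg \<eta> t j s b) * Q j H s b)" for s
  have H': "H' \<in> Pol" "H' = H(j := pg \<eta> (Suc t) j)"
    unfolding H_def H'_def by (rule hybrid_policy, rule switch_first_Suc)
  have g: "g s \<ge> step_sq \<eta> t j s / \<eta> - e" if "s < m" for s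
    using hybrid_gain_lower_bound[OF eta j that] unfolding g_def e_def H_def by simp
  have H: "H \<in> Pol" "H j = pg \<eta> t j"
    unfolding H_def by (rule hybrid_policy, rule switch_first_at)
  have D: "V j H' s - V j H s = g s + \<delta> * (\<Sum>s1<m. TM H' s s1 * (V j H' s1 - V j H s1))"
    if s: "s < m" for s
  proof -
    have "(\<Sum>a\<in>JA. (pj H' s a - pj H s a) * action_value H j s a) = g s"
      using pjoint_update_diff[OF H(1) j s, of "pg \<eta> (Suc t) j"] unfolding H'(2) g_def H(2) .
    thus ?thesis using value_diff_recursion[OF H(1) H'(1) j s] by linarith
  qed
  have Vb: "V j H' s0 - V j H s0 \<ge> g s0 - \<delta> * e / (1 - \<delta>)"
  proof (rule discounted_fixpoint_point_bound
      [OF discount_nonneg discount_lt_1 trans_mat_nonneg[OF H'(1)] trans_mat_sum[OF H'(1)] D _ s0])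
    fix s assume "s < m"
    thus "g s \<ge> - e" using g[of s] step_sq_nonneg[of \<eta> t j s] eta
      by (smt (verit) divide_nonneg_pos)
  qed
  have "e + \<delta> * e / (1 - \<delta>) = e / (1 - \<delta>)" using discount_lt_1 by (simp add: field_simps)
  also have "\<dots> = lag_error \<eta>" unfolding e_def lag_error_def by (simp add: power3_eq_cube power2_eq_square)
  finally have "e + \<delta> * e / (1 - \<delta>) = lag_error \<eta>" .
  thus ?thesis using Vb g[OF s0] unfolding H_def H'_def by linarith
qed

lemma potential_increase_player:
  assumes eta: "\<eta> > 0" and j: "j < n" and s0: "s0 < m"
    and ap: "alpha_potential n m k u P \<delta> \<alpha> \<Phi>"
  shows "\<Phi> s0 (hybrid \<eta> t (Suc j)) - \<Phi> s0 (hybrid \<eta> t j) \<ge> step_sq \<eta> t j s0 / \<eta> - lag_error \<eta> - \<alpha>"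
proof -
  have "\<bar>(\<Phi> s0 (hybrid \<eta> t (Suc j)) - \<Phi> s0 (hybrid \<eta> t j))
      - (V j (hybrid \<eta> t (Suc j)) s0 - V j (hybrid \<eta> t j) s0)\<bar> \<le> \<alpha>"
    using ap s0 j hybrid_policy policy_component[OF pga_policy j]
    unfolding alpha_potential_def switch_first_Suc by blast
  thus ?thesis using value_increase_player[OF eta j s0, of t] by linarith
qed

lemma potential_increase_state:
  assumes eta: "\<eta> > 0" and s0: "s0 < m"
    and ap: "alpha_potential n m k u P \<delta> \<alpha> \<Phi>"
  shows "\<Phi> s0 (pg \<eta> (Suc t)) - \<Phi> s0 (pg \<eta> t) \<ge>
      (\<Sum>j<n. step_sq \<eta> t j s0) / \<eta> - real n * (lag_error \<eta> + \<alpha>)"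
proof -
  have "\<Phi> s0 (pg \<eta> (Suc t)) - \<Phi> s0 (pg \<eta> t) = (\<Sum>j<n. \<Phi> s0 (hybrid \<eta> t (Suc j)) - \<Phi> s0 (hybrid \<eta> t j))"
    using sum_lessThan_telescope[of "\<lambda>j. \<Phi> s0 (hybrid \<eta> t j)" n]
    by (simp only: switch_first_n[OF pga_policy pga_policy] switch_first_0)
  also have "\<dots> \<ge> (\<Sum>j<n. step_sq \<eta> t j s0 / \<eta> - lag_error \<eta> - \<alpha>)"
    using potential_increase_player[OF eta _ s0 ap] by (intro sum_mono) auto
  finally show ?thesis by (simp add: sum_subtractf sum_divide_distrib algebra_simps)
qed

definition step_sq_avg :: "(nat \<Rightarrow> real) \<Rightarrow> real \<Rightarrow> nat \<Rightarrow> real" where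
  "step_sq_avg \<nu> \<eta> t = (\<Sum>s<m. \<nu> s * (\<Sum>j<n. step_sq \<eta> t j s))"

lemma step_sq_avg_nonneg: "\<nu> \<in> state_dists m \<Longrightarrow> 0 \<le> step_sq_avg \<nu> \<eta> t"
  unfolding step_sq_avg_def state_dists_def by (auto intro!: sum_nonneg mult_nonneg_nonneg step_sq_nonneg)

lemma potential_increase:
  assumes eta: "\<eta> > 0" and nu: "\<nu> \<in> state_dists m"
    and ap: "alpha_potential n m k u P \<delta> \<alpha> \<Phi>"
  shows "Phi_dist m \<Phi> \<nu> (pg \<eta> (Suc t)) - Phi_dist m \<Phi> \<nu> (pg \<eta> t) \<ge>
      step_sq_avg \<nu> \<eta> t / \<eta> - real n * (lag_error \<eta> + \<alpha>)"
proof -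
  define c where "c = real n * (lag_error \<eta> + \<alpha>)"
  have "(\<Sum>s<m. \<nu> s * ((\<Sum>j<n. step_sq \<eta> t j s) / \<eta> - c))
      \<le> (\<Sum>s<m. \<nu> s * (\<Phi> s (pg \<eta> (Suc t)) - \<Phi> s (pg \<eta> t)))"
    using potential_increase_state[OF eta _ ap] nu unfolding state_dists_def c_def
    by (intro sum_mono mult_left_mono) auto
  also have "\<dots> = Phi_dist m \<Phi> \<nu> (pg \<eta> (Suc t)) - Phi_dist m \<Phi> \<nu> (pg \<eta> t)"
    unfolding Phi_dist_def by (simp add: sum_subtractf[symmetric] algebra_simps)
  finally show ?thesis using nu unfolding state_dists_def step_sq_avg_def c_def
    by (simp add: right_diff_distrib sum_subtractf sum_divide_distrib[symmetric] sum_distrib_right[symmetric])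
qed

lemma sum_step_sq_avg_le:
  assumes eta: "\<eta> > 0" and nu: "\<nu> \<in> state_dists m"
    and ap: "alpha_potential n m k u P \<delta> \<alpha> \<Phi>"
    and C: "\<forall>pol\<in>Pol. \<forall>pol'\<in>Pol. \<forall>\<mu>'\<in>state_dists m. \<bar>Phi_dist m \<Phi> \<mu>' pol - Phi_dist m \<Phi> \<mu>' pol'\<bar> \<le> C"
  shows "(\<Sum>t=1..T. step_sq_avg \<nu> \<eta> t) \<le> \<eta> * (C + real T * (real n * (lag_error \<eta> + \<alpha>)))"
proof -
  define c where "c = real n * (lag_error \<eta> + \<alpha>)"
  define F where "F t = Phi_dist m \<Phi> \<nu> (pg \<eta> t)" for t
  have "(\<Sum>t=1..T. step_sq_avg \<nu> \<eta> t / \<eta>) \<le> (\<Sum>t=1..T. (F (Suc t) - F t) + c)"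
    using potential_increase[OF eta nu ap] unfolding F_def c_def by (intro sum_mono) (smt (verit))
  also have "\<dots> = (F (Suc T) - F 1) + real T * c"
    by (simp add: sum.distrib sum_Suc_diff)
  also have "F (Suc T) - F 1 \<le> C"
    using C[rule_format, OF pga_policy pga_policy nu, of \<eta> "Suc T" \<eta> 1] unfolding F_def by linarith
  finally have "(\<Sum>t=1..T. step_sq_avg \<nu> \<eta> t) / \<eta> \<le> C + real T * c" by (simp add: sum_divide_distrib)
  thus ?thesis using eta unfolding c_def by (simp add: divide_le_eq mult.commute)
qed

section \<open>Nash-regret\<close>

lemma value_fn_bounds:
  assumes pol: "pol \<in> Pol" and mu: "\<mu> \<in> state_dists m" and i: "i < n"
  shows "0 \<le> Vm i \<mu> pol \<and> Vm i \<mu> pol \<le> 1 / (1 - \<delta>)"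
proof -
  have "Vm i \<mu> pol \<le> (\<Sum>s<m. \<mu> s * (1 / (1 - \<delta>)))"
    unfolding value_fn_linear[OF assms] using assms value_bounds unfolding state_dists_def
    by (intro sum_mono mult_left_mono) auto
  also have "\<dots> = 1 / (1 - \<delta>)" using mu unfolding state_dists_def by (simp add: sum_divide_distrib[symmetric])
  finally show ?thesis
    unfolding value_fn_linear[OF assms] using assms value_bounds unfolding state_dists_def
    by (auto intro!: sum_nonneg mult_nonneg_nonneg)
qed

lemma value_update_diff:
  assumes pol: "pol \<in> Pol" and i: "i < n" and p: "p \<in> player_policies m (k i)"
    and mu: "\<mu> \<in> state_dists m"
  shows "Vm i \<mu> (pol(i := p)) - Vm i \<mu> pol
    = 1 / (1 - \<delta>) * (\<Sum>s<m. vd \<mu> (pol(i := p)) s * (\<Sum>b<k i. (p s b - pol i s b) * Q i pol s b))"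
proof -
  define pol' where "pol' = pol(i := p)"
  have pol': "pol' \<in> Pol" unfolding pol'_def by (rule policy_update[OF pol i p])
  have "Vm i \<mu> pol' - Vm i \<mu> pol = (\<Sum>s<m. \<mu> s * (V i pol' s - V i pol s))"
    unfolding value_fn_linear[OF pol mu i] value_fn_linear[OF pol' mu i]
    by (simp add: sum_subtractf[symmetric] right_diff_distrib)
  also have "\<dots> = 1 / (1 - \<delta>) * (\<Sum>s<m. vd \<mu> pol' s * (\<Sum>b<k i. (p s b - pol i s b) * Q i pol s b))"
  proof (rule performance_difference[OF pol' mu])
    fix s assume s: "s < m"
    show "V i pol' s - V i pol s = (\<Sum>b<k i. (p s b - pol i s b) * Q i pol s b)
        + \<delta> * (\<Sum>s1<m. TM pol' s s1 * (V i pol' s1 - V i pol s1))"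
      using value_diff_recursion[OF pol pol' i s] pjoint_update_diff[OF pol i s, of p]
      unfolding pol'_def by simp
    show "\<bar>V i pol' s - V i pol s\<bar> \<le> 2 / (1 - \<delta>)"
      using value_bounds[OF pol i s] value_bounds[OF pol' i s] discount_lt_1
      by (auto simp: abs_le_iff divide_right_mono)
  qed
  finally show ?thesis unfolding pol'_def .
qed

text \<open>The mismatch coefficient \<open>\<rho>\<close> moves the visitation distribution of the deviation onto
  the fixed distribution \<open>\<nu>\<close> on which the potential argument controls the steps.\<close>

lemma value_gain_le_step:
  assumes eta: "\<eta> > 0" and small: "\<eta> * sqrt (real Amax) / (1 - \<delta>) \<le> 1"
    and i: "i < n" and p: "p \<in> player_policies m (k i)" and mu: "\<mu> \<in> state_dists m"
    and nu: "\<nu> \<in> state_dists m" and rho: "\<rho> \<ge> 0"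
    and dnu: "\<And>s. s < m \<Longrightarrow> vd \<mu> ((pg \<eta> t)(i := p)) s \<le> \<rho> * \<nu> s"
  shows "Vm i \<mu> ((pg \<eta> t)(i := p)) - Vm i \<mu> (pg \<eta> t) \<le> 3 / ((1 - \<delta>) * \<eta>) * sqrt (\<rho> * step_sq_avg \<nu> \<eta> t)"
proof -
  define d where "d s = vd \<mu> ((pg \<eta> t)(i := p)) s" for s
  have pol': "(pg \<eta> t)(i := p) \<in> Pol" by (rule policy_update[OF pga_policy i p])
  have d: "\<forall>s\<in>{..<m}. 0 \<le> d s" "(\<Sum>s<m. d s) = 1"
    unfolding d_def using visit_dist_nonneg[OF pol' mu] visit_dist_sum[OF pol' mu] by auto
  have "(\<Sum>s<m. d s * (\<Sum>b<k i. (p s b - pg \<eta> t i s b) * Q i (pg \<eta> t) s b))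
      \<le> (\<Sum>s<m. d s * (3 / \<eta> * sqrt (step_sq \<eta> t i s)))"
  proof (intro sum_mono mult_left_mono)
    fix s assume "s \<in> {..<m}"
    hence s: "s < m" by simp
    hence "p s \<in> simplex (k i)" using p unfolding player_policies_def by auto
    thus "(\<Sum>b<k i. (p s b - pg \<eta> t i s b) * Q i (pg \<eta> t) s b) \<le> 3 / \<eta> * sqrt (step_sq \<eta> t i s)"
      using Q_fn_gain_le_step[OF i s eta _ small, of "p s" t] eta by (simp add: field_simps)
  qed (use d in auto)
  also have "\<dots> = 3 / \<eta> * (\<Sum>s<m. d s * sqrt (step_sq \<eta> t i s))"
    by (simp add: sum_distrib_left mult_ac)
  also have "\<dots> \<le> 3 / \<eta> * sqrt (\<Sum>s<m. d s * step_sq \<eta> t i s)"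
    using d step_sq_nonneg eta by (intro mult_left_mono sum_mult_sqrt_le_sqrt_sum) auto
  also have "\<dots> \<le> 3 / \<eta> * sqrt (\<rho> * step_sq_avg \<nu> \<eta> t)"
  proof -
    have "(\<Sum>s<m. d s * step_sq \<eta> t i s) \<le> (\<Sum>s<m. (\<rho> * \<nu> s) * (\<Sum>j<n. step_sq \<eta> t j s))"
      using dnu d rho nu i step_sq_nonneg unfolding d_def state_dists_def
      by (intro sum_mono mult_mono member_le_sum) auto
    also have "\<dots> = \<rho> * step_sq_avg \<nu> \<eta> t" unfolding step_sq_avg_def by (simp add: sum_distrib_left mult_ac)
    finally show ?thesis using eta by (intro mult_left_mono) auto
  qed
  finally have "(\<Sum>s<m. d s * (\<Sum>b<k i. (p s b - pg \<eta> t i s b) * Q i (pg \<eta> t) s b))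
      \<le> 3 / \<eta> * sqrt (\<rho> * step_sq_avg \<nu> \<eta> t)" .
  hence "1 / (1 - \<delta>) * (\<Sum>s<m. d s * (\<Sum>b<k i. (p s b - pg \<eta> t i s b) * Q i (pg \<eta> t) s b))
      \<le> 1 / (1 - \<delta>) * (3 / \<eta> * sqrt (\<rho> * step_sq_avg \<nu> \<eta> t))"
    using discount_lt_1 by (intro mult_left_mono) auto
  thus ?thesis unfolding value_update_diff[OF pga_policy i p mu] d_def by simp
qed

lemma nash_regret_le_mean:
  assumes gain: "\<And>t i p. i < n \<Longrightarrow> p \<in> player_policies m (k i) \<Longrightarrow>
      Vm i \<mu> ((pg \<eta> t)(i := p)) - Vm i \<mu> (pg \<eta> t) \<le> f t"
  shows "nash_regret n m k u P \<delta> \<mu> \<eta> T \<le> (1 / real T) * (\<Sum>t=1..T. f t)"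
  unfolding nash_regret_def
proof (intro mult_left_mono sum_mono)
  fix t
  have "(SUP p\<in>player_policies m (k i). Vm i \<mu> ((pg \<eta> t)(i := p))) - Vm i \<mu> (pg \<eta> t) \<le> f t"
    if i: "i < n" for i
  proof -
    have "player_policies m (k i) \<noteq> {}" using policy_component[OF pga_policy i] by auto
    hence "(SUP p\<in>player_policies m (k i). Vm i \<mu> ((pg \<eta> t)(i := p))) \<le> Vm i \<mu> (pg \<eta> t) + f t"
      using gain[OF i] by (intro cSUP_least) (auto simp: algebra_simps)
    thus ?thesis by simp
  qed
  moreover have "{..<n} \<noteq> {}" using n_pos by (metis lessThan_iff empty_iff less_le_trans zero_less_one)
  ultimately show "Max ((\<lambda>i. (SUP p\<in>player_policies m (k i). Vm i \<mu> ((pg \<eta> t)(i := p)))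
      - Vm i \<mu> (pg \<eta> t)) ` {..<n}) \<le> f t"
    by (subst Max_le_iff) auto
qed simp

lemma nash_regret_le_trivial:
  assumes mu: "\<mu> \<in> state_dists m" and T: "T \<ge> 1"
  shows "nash_regret n m k u P \<delta> \<mu> \<eta> T \<le> 1 / (1 - \<delta>)"
proof -
  have "nash_regret n m k u P \<delta> \<mu> \<eta> T \<le> (1 / real T) * (\<Sum>t=1..T. 1 / (1 - \<delta>))"
  proof (rule nash_regret_le_mean)
    fix t i p assume i: "i < n" and p: "p \<in> player_policies m (k i)"
    show "Vm i \<mu> ((pg \<eta> t)(i := p)) - Vm i \<mu> (pg \<eta> t) \<le> 1 / (1 - \<delta>)"
      using value_fn_bounds[OF policy_update[OF pga_policy i p] mu i, of \<eta> t]
        value_fn_bounds[OF pga_policy mu i, of \<eta> t]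
      by linarith
  qed
  thus ?thesis using T by simp
qed

lemma nash_regret_le_steps:
  assumes eta: "\<eta> > 0" and small: "\<eta> * sqrt (real Amax) / (1 - \<delta>) \<le> 1"
    and mu: "\<mu> \<in> state_dists m" and nu: "\<nu> \<in> state_dists m" and rho: "\<rho> \<ge> 0"
    and dnu: "\<And>pol s. pol \<in> Pol \<Longrightarrow> s < m \<Longrightarrow> vd \<mu> pol s \<le> \<rho> * \<nu> s"
    and T: "T \<ge> 1"
  shows "nash_regret n m k u P \<delta> \<mu> \<eta> T
    \<le> 3 / ((1 - \<delta>) * \<eta>) * sqrt (\<rho> * (\<Sum>t=1..T. step_sq_avg \<nu> \<eta> t) / real T)"
proof -
  define c where "c = 3 / ((1 - \<delta>) * \<eta>)"
  have "nash_regret n m k u P \<delta> \<mu> \<eta> T \<le> (1 / real T) * (\<Sum>t=1..T. c * sqrt (\<rho> * step_sq_avg \<nu> \<eta> t))"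
    unfolding c_def using policy_update[OF pga_policy]
    by (intro nash_regret_le_mean value_gain_le_step[OF eta small _ _ mu nu rho dnu])
  also have "\<dots> = c * (\<Sum>t=1..T. (1 / real T) * sqrt (\<rho> * step_sq_avg \<nu> \<eta> t))"
    by (simp add: sum_distrib_left mult_ac)
  also have "\<dots> \<le> c * sqrt (\<Sum>t=1..T. (1 / real T) * (\<rho> * step_sq_avg \<nu> \<eta> t))"
    using T rho step_sq_avg_nonneg[OF nu] eta discount_lt_1 unfolding c_def
    by (intro mult_left_mono sum_mult_sqrt_le_sqrt_sum) auto
  also have "(\<Sum>t=1..T. (1 / real T) * (\<rho> * step_sq_avg \<nu> \<eta> t)) = \<rho> * (\<Sum>t=1..T. step_sq_avg \<nu> \<eta> t) / real T"
    by (simp add: sum_distrib_left[symmetric] sum_divide_distrib[symmetric])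
  finally show ?thesis unfolding c_def .
qed

lemma ratio_sup_less_imp_le:
  assumes lt: "ratio_sup m d \<nu> < ereal c" and s: "s < m" and nu: "0 \<le> \<nu> s"
  shows "d s \<le> c * \<nu> s" and "0 < \<nu> s \<Longrightarrow> d s < c * \<nu> s"
proof -
  have "(if \<nu> s = 0 then (if d s = 0 then 0 else \<infinity>) else ereal (d s / \<nu> s)) \<le> ratio_sup m d \<nu>"
    unfolding ratio_sup_def using s by (intro SUP_upper) auto
  hence ratio: "(if \<nu> s = 0 then (if d s = 0 then 0 else \<infinity>) else ereal (d s / \<nu> s)) < ereal c"
    using lt by (rule le_less_trans)
  show strict: "d s < c * \<nu> s" if "0 < \<nu> s"
    using ratio that by (simp add: divide_less_eq)
  show "d s \<le> c * \<nu> s"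
    using ratio nu strict by (cases "\<nu> s = 0") (auto split: if_splits)
qed

lemma ratio_sup_visit_dist_ge_1:
  assumes pol: "pol \<in> Pol" and mu: "\<mu> \<in> state_dists m" and nu: "\<nu> \<in> state_dists m"
  shows "ratio_sup m (vd \<mu> pol) \<nu> \<ge> 1"
proof (rule ccontr)
  assume "\<not> ratio_sup m (vd \<mu> pol) \<nu> \<ge> 1"
  hence lt: "ratio_sup m (vd \<mu> pol) \<nu> < ereal 1" by (simp add: one_ereal_def)
  have nn: "\<And>s. s < m \<Longrightarrow> 0 \<le> \<nu> s" using nu unfolding state_dists_def by auto
  obtain s0 where s0: "s0 < m" "\<nu> s0 > 0"
  proof (rule ccontr)
    assume "\<not> thesis"
    hence "\<And>s. s < m \<Longrightarrow> \<nu> s = 0" using that nn by force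
    thus False using nu unfolding state_dists_def by simp
  qed
  have "(\<Sum>s<m. vd \<mu> pol s) < (\<Sum>s<m. \<nu> s)"
    using ratio_sup_less_imp_le[OF lt _ nn] s0 by (intro sum_strict_mono_ex1) auto
  thus False using visit_dist_sum[OF pol mu] nu unfolding state_dists_def by simp
qed

lemma kappa_tilde_ge_1: "\<mu> \<in> state_dists m \<Longrightarrow> kappa_tilde n m k P \<delta> \<mu> \<ge> 1"
  unfolding kappa_tilde_def
proof (intro INF_greatest)
  fix \<nu> assume mu: "\<mu> \<in> state_dists m" and nu: "\<nu> \<in> state_dists m"
  have "1 \<le> ratio_sup m (vd \<mu> (pg 1 0)) \<nu>" by (rule ratio_sup_visit_dist_ge_1[OF pga_policy mu nu])
  also have "\<dots> \<le> (SUP pol\<in>Pol. ratio_sup m (vd \<mu> pol) \<nu>)" by (rule SUP_upper[OF pga_policy])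
  finally show "1 \<le> (SUP pol\<in>Pol. ratio_sup m (vd \<mu> pol) \<nu>)" .
qed

text \<open>The infimum defining \<open>\<kappa>\<close> need not be attained; the factor 2 leaves room for a near-optimal \<open>\<nu>\<close>.\<close>

lemma kappa_tilde_dominating_dist:
  assumes mu: "\<mu> \<in> state_dists m" and fin: "kappa_tilde n m k P \<delta> \<mu> < \<infinity>"
  obtains \<nu> where "\<nu> \<in> state_dists m"
    and "\<And>pol s. pol \<in> Pol \<Longrightarrow> s < m \<Longrightarrow> vd \<mu> pol s \<le> 2 * real_of_ereal (kappa_tilde n m k P \<delta> \<mu>) * \<nu> s"
proof -
  define \<kappa> where "\<kappa> = kappa_tilde n m k P \<delta> \<mu>"
  have "\<kappa> \<ge> 1" unfolding \<kappa>_def by (rule kappa_tilde_ge_1[OF mu])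
  moreover obtain r where "\<kappa> = ereal r"
    using fin \<open>\<kappa> \<ge> 1\<close> unfolding \<kappa>_def by (cases "kappa_tilde n m k P \<delta> \<mu>") auto
  ultimately have r: "\<kappa> = ereal r" "r \<ge> 1" by auto
  hence "(INF \<nu>\<in>state_dists m. SUP pol\<in>Pol. ratio_sup m (vd \<mu> pol) \<nu>) < ereal (2 * r)"
    unfolding \<kappa>_def kappa_tilde_def[symmetric] by simp
  then obtain \<nu> where nu: "\<nu> \<in> state_dists m"
    and lt: "(SUP pol\<in>Pol. ratio_sup m (vd \<mu> pol) \<nu>) < ereal (2 * r)"
    unfolding INF_less_iff by blast
  have "vd \<mu> pol s \<le> 2 * r * \<nu> s" if pol: "pol \<in> Pol" and s: "s < m" for pol s
    using ratio_sup_less_imp_le(1)[OF le_less_trans[OF SUP_upper[OF pol] lt] s] nu s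
    unfolding state_dists_def by auto
  thus ?thesis using that nu r unfolding \<kappa>_def by auto
qed

lemma alpha_potential_nonneg:
  assumes "alpha_potential n m k u P \<delta> \<alpha> \<Phi>"
  shows "0 \<le> \<alpha>"
proof -
  have "\<bar>(\<Phi> 0 ((pg 1 0)(0 := pg 1 0 0)) - \<Phi> 0 (pg 1 0))
       - (V 0 ((pg 1 0)(0 := pg 1 0 0)) 0 - V 0 (pg 1 0) 0)\<bar> \<le> \<alpha>"
    using assms[unfolded alpha_potential_def, rule_format, of 0 0 "pg 1 0" "pg 1 0 0"]
      m_pos n_pos pga_policy[of 1 0] policy_component[OF pga_policy[of 1 0], of 0] by simp
  thus ?thesis by simp
qed

lemma kappa_tilde_real_ge_1:
  assumes "\<mu> \<in> state_dists m" "kappa_tilde n m k P \<delta> \<mu> < \<infinity>"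
  shows "1 \<le> real_of_ereal (kappa_tilde n m k P \<delta> \<mu>)"
  using kappa_tilde_ge_1[OF assms(1)] assms(2)
  by (cases "kappa_tilde n m k P \<delta> \<mu>") auto

end

section \<open>The rate for the prescribed step size\<close>

text \<open>Writing \<open>a = (1 - \<delta>) powr (1/4)\<close> and \<open>q = (C/T + n\<^sup>2\<alpha>) powr (1/4)\<close>, the prescribed step
  size is \<open>a^10 q\<^sup>2 / (2nA)\<close> and the claimed bound is \<open>9 sqrt (\<kappa>An) q / a^9\<close>.\<close>

lemma rate_trivial_case:
  fixes a q x :: real
  assumes "0 < a" "0 \<le> x" "0 < q" "\<not> x * q < a^5"
  shows "1 / a^4 \<le> 9 * x / a^9 * q"
proof -
  have "a^5 \<le> x * q" using assms(4) by simp
  hence "a^5 / a^9 \<le> x * q / a^9" using assms(1) by (intro divide_right_mono) auto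
  moreover have "a^5 / a^9 = 1 / a^4" using assms(1) by (simp add: power_add[symmetric] field_simps)
  moreover have "x * q \<le> 9 * (x * q)" using assms(2,3) by simp
  hence "x * q / a^9 \<le> 9 * x / a^9 * q" using assms(1) by (simp add: divide_right_mono)
  ultimately show ?thesis by linarith
qed

lemma rate_step_small:
  fixes a q r A N :: real
  assumes a: "0 < a" "a \<le> 1" and q: "0 < q" and r: "1 \<le> r" and A: "1 \<le> A" and N: "1 \<le> N"
    and lt: "sqrt (r * A * N) * q < a^5"
  shows "a^10 * q^2 / (2 * N * A) * sqrt A / a^4 \<le> 1"
proof -
  have "(sqrt (r * A * N) * q)^2 < (a^5)^2" using lt q r A N by (intro power_strict_mono) auto
  hence "r * A * N * q^2 < a^10" using r A N by (simp add: power_mult_distrib flip: power_mult)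
  moreover have "A * N * q^2 \<le> r * A * N * q^2" using r A N q by simp
  moreover have "1 * 1 \<le> A * N" using A N by (intro mult_mono) auto
  hence "1 * q^2 \<le> A * N * q^2" by (intro mult_right_mono) auto
  moreover have "a^10 \<le> 1" "a^6 \<le> 1" using a by (simp_all add: power_le_one)
  ultimately have q2: "q^2 \<le> 1" by linarith
  have "sqrt A \<le> sqrt (A * A)" using A by (intro real_sqrt_le_mono) simp
  hence "sqrt A \<le> A" using A by simp
  have p: "a^10 / a^4 = a^6" using a by (simp add: power_diff[symmetric])
  have "a^10 * q^2 / (2 * N * A) * sqrt A / a^4 = a^10 / a^4 * q^2 * sqrt A / (2 * N * A)"
    by (simp add: mult_ac)
  also have "\<dots> = a^6 * q^2 * sqrt A / (2 * N * A)" by (simp only: p)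
  also have "\<dots> \<le> 1"
  proof -
    have "a^6 * q^2 * sqrt A \<le> 1 * 1 * A"
      using \<open>sqrt A \<le> A\<close> \<open>a^6 \<le> 1\<close> q2 a q A by (intro mult_mono) auto
    also have "\<dots> \<le> 2 * N * A" using A N by simp
    finally show ?thesis using A N by simp
  qed
  finally show ?thesis .
qed

lemma rate_lag_error:
  fixes a q A N :: real
  assumes a: "0 < a" and A: "1 \<le> A" and N: "1 \<le> N"
  shows "N * (2 * N * (a^10 * q^2 / (2 * N * A) * A / a^4)^2 / (a^4)^3) = q^4 / 2"
proof -
  have p: "a^10 / a^4 = a^6" using a by (simp add: power_diff[symmetric])
  have "a^10 * q^2 / (2 * N * A) * A / a^4 = a^10 / a^4 * q^2 / (2 * N)"
    using a A by (simp add: field_simps)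
  also have "\<dots> = a^6 * q^2 / (2 * N)" by (simp only: p)
  finally have "a^10 * q^2 / (2 * N * A) * A / a^4 = a^6 * q^2 / (2 * N)" .
  moreover have "(a^6 * q^2 / (2 * N))^2 = a^12 * q^4 / (4 * N^2)"
    by (simp add: power_mult_distrib power_divide flip: power_mult)
  moreover have "(a^4)^3 = a^12" by (simp flip: power_mult)
  moreover have "N * (2 * N * (a^12 * q^4 / (4 * N^2)) / a^12) = q^4 / 2"
    using a N by (simp add: power2_eq_square)
  ultimately show ?thesis by simp
qed

lemma rate_final:
  fixes x w q r A N \<eta> :: real
  assumes x: "0 < x" and w: "0 < w" and q: "0 < q" and r: "1 \<le> r" and A: "1 \<le> A" and N: "1 \<le> N"
    and \<eta>: "\<eta> = w^2 * q^2 / (2 * N * A)"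
  shows "3 / (x * \<eta>) * sqrt (4 * r * \<eta> * q^4) \<le> 9 * sqrt (r * A * N) / (x * w) * q"
proof -
  have \<eta>0: "\<eta> > 0" using \<eta> w q A N by simp
  have cancel: "36 * r * (Q * Q) / (X * (W * Q / (2 * N * A))) = 72 * (r * A * N * Q / (X * W))"
    if "0 < X" "0 < W" "0 < Q" for X W Q :: real
    using that A N by (simp add: field_simps)
  have "(3 / (x * \<eta>) * sqrt (4 * r * \<eta> * q^4))^2 = 36 * r * q^4 / (x^2 * \<eta>)"
    using \<eta>0 r x by (simp add: power_mult_distrib power_divide power2_eq_square)
  also have "\<dots> = 72 * (r * A * N * q^2 / (x * w)^2)"
    using cancel[of "x^2" "w^2" "q^2"] x w q unfolding \<eta>
    by (simp add: power_mult_distrib flip: power_add)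
  also have "\<dots> \<le> 81 * (r * A * N * q^2 / (x * w)^2)" using x w q r A N by (intro mult_right_mono) auto
  also have "\<dots> = (9 * sqrt (r * A * N) / (x * w) * q)^2"
    using r A N by (simp add: power_mult_distrib power_divide)
  finally have "(3 / (x * \<eta>) * sqrt (4 * r * \<eta> * q^4))^2 \<le> (9 * sqrt (r * A * N) / (x * w) * q)^2" .
  moreover have "0 \<le> 9 * sqrt (r * A * N) / (x * w) * q" using x w q r A N by simp
  ultimately show ?thesis by (rule power2_le_imp_le)
qed

context game begin

lemma nash_regret_le_potential_gap:
  assumes eta: "\<eta> > 0" and small: "\<eta> * sqrt (real Amax) / (1 - \<delta>) \<le> 1"
    and mu: "\<mu> \<in> state_dists m" and nu: "\<nu> \<in> state_dists m" and rho: "\<rho> \<ge> 0"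
    and dnu: "\<And>pol s. pol \<in> Pol \<Longrightarrow> s < m \<Longrightarrow> vd \<mu> pol s \<le> \<rho> * \<nu> s"
    and T: "T \<ge> 1" and ap: "alpha_potential n m k u P \<delta> \<alpha> \<Phi>"
    and C: "\<forall>pol\<in>Pol. \<forall>pol'\<in>Pol. \<forall>\<mu>'\<in>state_dists m. \<bar>Phi_dist m \<Phi> \<mu>' pol - Phi_dist m \<Phi> \<mu>' pol'\<bar> \<le> C"
    and B: "C / real T + real n * (lag_error \<eta> + \<alpha>) \<le> B"
  shows "nash_regret n m k u P \<delta> \<mu> \<eta> T \<le> 3 / ((1 - \<delta>) * \<eta>) * sqrt (\<rho> * (\<eta> * B))"
proof -
  have "(\<Sum>t=1..T. step_sq_avg \<nu> \<eta> t) / real T \<le> \<eta> * (C + real T * (real n * (lag_error \<eta> + \<alpha>))) / real T"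
    using sum_step_sq_avg_le[OF eta nu ap C, of T] T by (intro divide_right_mono) auto
  also have "\<dots> = \<eta> * (C / real T + real n * (lag_error \<eta> + \<alpha>))"
    using T by (simp add: field_simps)
  also have "\<dots> \<le> \<eta> * B" using B eta by (intro mult_left_mono) auto
  finally have "\<rho> * ((\<Sum>t=1..T. step_sq_avg \<nu> \<eta> t) / real T) \<le> \<rho> * (\<eta> * B)"
    using rho by (intro mult_left_mono) auto
  hence "sqrt (\<rho> * (\<Sum>t=1..T. step_sq_avg \<nu> \<eta> t) / real T) \<le> sqrt (\<rho> * (\<eta> * B))"
    by (intro real_sqrt_le_mono) simp
  hence "3 / ((1 - \<delta>) * \<eta>) * sqrt (\<rho> * (\<Sum>t=1..T. step_sq_avg \<nu> \<eta> t) / real T)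
      \<le> 3 / ((1 - \<delta>) * \<eta>) * sqrt (\<rho> * (\<eta> * B))"
    using eta discount_lt_1 by (intro mult_left_mono) auto
  thus ?thesis using nash_regret_le_steps[OF eta small mu nu rho dnu T] by linarith
qed

lemma nash_regret_le_quartic_rate:
  assumes mu: "\<mu> \<in> state_dists m" and ap: "alpha_potential n m k u P \<delta> \<alpha> \<Phi>"
    and C: "\<forall>pol\<in>Pol. \<forall>pol'\<in>Pol. \<forall>\<mu>'\<in>state_dists m. \<bar>Phi_dist m \<Phi> \<mu>' pol - Phi_dist m \<Phi> \<mu>' pol'\<bar> \<le> C"
    and fin: "kappa_tilde n m k P \<delta> \<mu> < \<infinity>" and T: "T \<ge> 1"
    and a: "0 < a" "1 - \<delta> = a^4" and q: "0 < q" "C / real T + real n ^ 2 * \<alpha> = q^4"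
    and eta: "\<eta> = a^10 * q^2 / (2 * real n * real Amax)"
  shows "nash_regret n m k u P \<delta> \<mu> \<eta> T
    \<le> 9 * sqrt (real_of_ereal (kappa_tilde n m k P \<delta> \<mu>) * real Amax * real n) / a^9 * q"
proof -
  define r where "r = real_of_ereal (kappa_tilde n m k P \<delta> \<mu>)"
  have r: "1 \<le> r" unfolding r_def by (rule kappa_tilde_real_ge_1[OF mu fin])
  have A: "1 \<le> real Amax" and N: "1 \<le> real n" using Amax_ge_1 n_pos by simp_all
  have a1: "a \<le> 1"
  proof (rule ccontr)
    assume "\<not> a \<le> 1"
    hence "1 < a^4" by (simp add: one_less_power)
    thus False using a discount_pos by simp
  qed
  show ?thesis
  proof (cases "sqrt (r * real Amax * real n) * q < a^5")
    case False
    have "nash_regret n m k u P \<delta> \<mu> \<eta> T \<le> 1 / (1 - \<delta>)" by (rule nash_regret_le_trivial[OF mu T])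
    moreover have "0 \<le> r * real Amax * real n" using r A N by simp
    ultimately show ?thesis using rate_trivial_case[OF a(1) _ q(1) False] a(2) unfolding r_def by simp
  next
    case True
    have eta0: "\<eta> > 0" unfolding eta using a q A N by simp
    have small: "\<eta> * sqrt (real Amax) / (1 - \<delta>) \<le> 1"
      using rate_step_small[OF a(1) a1 q(1) r A N True] unfolding eta a(2) .
    obtain \<nu> where nu: "\<nu> \<in> state_dists m"
      and dnu: "\<And>pol s. pol \<in> Pol \<Longrightarrow> s < m \<Longrightarrow> vd \<mu> pol s \<le> (2 * r) * \<nu> s"
      using kappa_tilde_dominating_dist[OF mu fin] unfolding r_def by blast
    have "real n * lag_error \<eta> = q^4 / 2"
      using rate_lag_error[OF a(1) A N, of q] unfolding lag_error_def eta a(2) .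
    moreover have "real n * \<alpha> \<le> real n ^ 2 * \<alpha>"
      using alpha_potential_nonneg[OF ap] N by (simp add: power2_eq_square mult_right_mono)
    moreover have "C / real T \<ge> 0" using q T C[rule_format, OF pga_policy pga_policy mu, of 1 0 1 0] by simp
    moreover have "0 \<le> q^4" using q by simp
    ultimately have X: "C / real T + real n * (lag_error \<eta> + \<alpha>) \<le> 2 * q^4"
      using q(2) unfolding distrib_left by linarith
    have "nash_regret n m k u P \<delta> \<mu> \<eta> T \<le> 3 / ((1 - \<delta>) * \<eta>) * sqrt ((2 * r) * (\<eta> * (2 * q^4)))"
      using r by (intro nash_regret_le_potential_gap[OF eta0 small mu nu _ dnu T ap C X]) auto
    also have "\<dots> = 3 / (a^4 * \<eta>) * sqrt (4 * r * \<eta> * q^4)" unfolding a(2) by (simp add: mult_ac)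
    also have "\<dots> \<le> 9 * sqrt (r * real Amax * real n) / (a^4 * a^5) * q"
      using a q(1) r A N eta by (intro rate_final) (simp_all flip: power_mult)
    also have "a^4 * a^5 = a^9" by (simp flip: power_add)
    finally show ?thesis unfolding r_def .
  qed
qed

lemma nash_regret_le_rate:
  assumes mu: "\<mu> \<in> state_dists m" and ap: "alpha_potential n m k u P \<delta> \<alpha> \<Phi>" and C0: "C > 0"
    and C: "\<forall>pol\<in>Pol. \<forall>pol'\<in>Pol. \<forall>\<mu>'\<in>state_dists m. \<bar>Phi_dist m \<Phi> \<mu>' pol - Phi_dist m \<Phi> \<mu>' pol'\<bar> \<le> C"
    and fin: "kappa_tilde n m k P \<delta> \<mu> < \<infinity>" and T: "T \<ge> 1"
    and eta: "\<eta> = (1 - \<delta>) powr 2.5 * sqrt (C + real n ^ 2 * \<alpha> * real T) / (2 * real n * real Amax * sqrt (real T))"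
  shows "nash_regret n m k u P \<delta> \<mu> \<eta> T
    \<le> 9 * sqrt (real_of_ereal (kappa_tilde n m k P \<delta> \<mu>) * real Amax * real n) / (1 - \<delta>) powr (9/4)
        * (C / real T + real n ^ 2 * \<alpha>) powr (1/4)"
proof -
  define Y where "Y = C / real T + real n ^ 2 * \<alpha>"
  define a where "a = (1 - \<delta>) powr (1/4)"
  define q where "q = Y powr (1/4)"
  have Y: "Y > 0" unfolding Y_def using C0 T alpha_potential_nonneg[OF ap] by (intro add_pos_nonneg) auto
  have a_pow: "a ^ j = (1 - \<delta>) powr (real j / 4)" for j
    unfolding a_def using discount_lt_1 by (simp add: powr_power)
  have q_pow: "q ^ j = Y powr (real j / 4)" for j unfolding q_def using Y by (simp add: powr_power)
  have "\<eta> = (1 - \<delta>) powr 2.5 * (sqrt (C + real n ^ 2 * \<alpha> * real T) / sqrt (real T))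
      / (2 * real n * real Amax)" unfolding eta by simp
  also have "sqrt (C + real n ^ 2 * \<alpha> * real T) / sqrt (real T) = sqrt Y"
    unfolding Y_def using T by (simp add: real_sqrt_divide[symmetric] field_simps)
  also have "\<dots> = q^2" using q_pow[of 2] Y by (simp add: powr_half_sqrt)
  finally have "\<eta> = a^10 * q^2 / (2 * real n * real Amax)" unfolding a_pow[of 10] by simp
  moreover have "0 < a" "1 - \<delta> = a^4" "0 < q" "Y = q^4"
    using a_pow[of 4] q_pow[of 4] discount_lt_1 Y unfolding a_def q_def by simp_all
  ultimately have "nash_regret n m k u P \<delta> \<mu> \<eta> T
      \<le> 9 * sqrt (real_of_ereal (kappa_tilde n m k P \<delta> \<mu>) * real Amax * real n) / a^9 * q"
    using nash_regret_le_quartic_rate[OF mu ap C fin T] unfolding Y_def by simp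
  moreover have "(1 - \<delta>) powr (9/4) = a^9" using a_pow[of 9] by simp
  ultimately show ?thesis unfolding Y_def[symmetric] q_def[symmetric] by simp
qed

end

theorem theorem1:
  "\<exists>c>0. \<forall>n m (k :: nat \<Rightarrow> nat) u P \<delta> \<mu> \<alpha> \<Phi> C T \<eta>.
     n \<ge> 1 \<longrightarrow> m \<ge> 1 \<longrightarrow> (\<forall>i<n. k i \<ge> 1) \<longrightarrow>
     0 < \<delta> \<longrightarrow> \<delta> < 1 \<longrightarrow>
     (\<forall>i<n. \<forall>s<m. \<forall>a\<in>joint_actions n k. 0 \<le> u i s a \<and> u i s a \<le> 1) \<longrightarrow>
     (\<forall>s<m. \<forall>a\<in>joint_actions n k. (\<forall>s'<m. 0 \<le> P s a s') \<and> (\<Sum>s'<m. P s a s') = 1) \<longrightarrow>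
     \<mu> \<in> state_dists m \<longrightarrow>
     alpha_potential n m k u P \<delta> \<alpha> \<Phi> \<longrightarrow>
     C > 0 \<longrightarrow>
     (\<forall>pol\<in>policies n m k. \<forall>pol'\<in>policies n m k. \<forall>\<mu>'\<in>state_dists m.
        \<bar>Phi_dist m \<Phi> \<mu>' pol - Phi_dist m \<Phi> \<mu>' pol'\<bar> \<le> C) \<longrightarrow>
     kappa_tilde n m k P \<delta> \<mu> < \<infinity> \<longrightarrow>
     T \<ge> 1 \<longrightarrow>
     \<eta> = (1 - \<delta>) powr 2.5 * sqrt (C + real n ^ 2 * \<alpha> * real T)
           / (2 * real n * real (Max (k ` {..<n})) * sqrt (real T)) \<longrightarrow>
     nash_regret n m k u P \<delta> \<mu> \<eta> T
       \<le> c * sqrt (real_of_ereal (kappa_tilde n m k P \<delta> \<mu>) * real (Max (k ` {..<n})) * real n)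
             / (1 - \<delta>) powr (9/4)
             * (C / real T + real n ^ 2 * \<alpha>) powr (1/4)"
proof (intro exI[of _ 9] conjI allI impI)
  fix n m :: nat and k :: "nat \<Rightarrow> nat" and u :: "nat \<Rightarrow> nat \<Rightarrow> (nat \<Rightarrow> nat) \<Rightarrow> real"
    and P :: "nat \<Rightarrow> (nat \<Rightarrow> nat) \<Rightarrow> nat \<Rightarrow> real" and \<delta> :: real and \<mu> \<alpha> \<Phi> C T \<eta>
  assume "n \<ge> 1" "m \<ge> 1" "\<forall>i<n. k i \<ge> 1" "0 < \<delta>" "\<delta> < 1"
    "\<forall>i<n. \<forall>s<m. \<forall>a\<in>joint_actions n k. 0 \<le> u i s a \<and> u i s a \<le> 1"
    "\<forall>s<m. \<forall>a\<in>joint_actions n k. (\<forall>s'<m. 0 \<le> P s a s') \<and> (\<Sum>s'<m. P s a s') = 1"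
  then interpret game n m k u P \<delta> by unfold_locales
  assume "\<mu> \<in> state_dists m" "alpha_potential n m k u P \<delta> \<alpha> \<Phi>" "C > 0"
    "\<forall>pol\<in>policies n m k. \<forall>pol'\<in>policies n m k. \<forall>\<mu>'\<in>state_dists m.
        \<bar>Phi_dist m \<Phi> \<mu>' pol - Phi_dist m \<Phi> \<mu>' pol'\<bar> \<le> C"
    "kappa_tilde n m k P \<delta> \<mu> < \<infinity>" "T \<ge> 1"
    "\<eta> = (1 - \<delta>) powr 2.5 * sqrt (C + real n ^ 2 * \<alpha> * real T)
           / (2 * real n * real (Max (k ` {..<n})) * sqrt (real T))"
  thus "nash_regret n m k u P \<delta> \<mu> \<eta> T
       \<le> 9 * sqrt (real_of_ereal (kappa_tilde n m k P \<delta> \<mu>) * real (Max (k ` {..<n})) * real n)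
             / (1 - \<delta>) powr (9/4) * (C / real T + real n ^ 2 * \<alpha>) powr (1/4)"
    by (rule nash_regret_le_rate)
qed simp

end
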